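(* Let $\mathcal{A}$ be a one-dimensional VASS MDP and suppose there is $\sigma\in\Sigma_{\mathrm{MD}}$ and a bounded-zero BSCC $\mathbb{B}$ of $\mathcal{A}_\sigma$, with $M$ the MEC such that $\mathbb{B}\subseteq M$. Then $\mathcal{L}$ is unbounded for the type $M$. Furthermore, if $\mathbb{B}$ contains the transition $t$, then $\mathcal{T}[t]$ is unbounded for the type $M$.
   Context: Let $d\ge 1$. A $d$-dimensional VASS MDP is a tuple $\mathcal{A}=(Q,(Q_n,Q_p),T,P)$, where $Q$ is a finite nonempty set of states partitioned into nondeterministic states $Q_n$ and probabilistic states $Q_p$; $T\subseteq Q\times\mathbb{Z}^d\times Q$ is a finite set of transitions such that for every $p\in Q$ the set $\mathit{Out}(p)$ of transitions of the form $(p,\mathbf{u},q)$ is nonempty; and $P$ assigns to every $t\in\mathit{Out}(p)$ with $p\in Q_p$ a positive rational probability such that $\sum_{t\in\mathit{Out}(p)}P(t)=1$. One-dimensional means $d=1$. A strategy $\sigma$ maps every finite path ending in a state $p\in Q_n$ to a probability distribution over $\mathit{Out}(p)$; an MD strategy chooses one fixed transition $\sigma(p)\in\mathit{Out}(p)$ per $p\in Q_n$, and $\Sigma_{\mathrm{MD}}$ is the set of MD strategies. A configuration $p\mathbf{v}$ is terminal if some component of $\mathbf{v}$ is negative. A computation from $p\mathbf{v}$ along an infinite path $p_0,\mathbf{u}_1,p_1,\dots$ is $p_0\mathbf{v}_0,p_1\mathbf{v}_1,\dots$ with $\mathbf{v}_0=\mathbf{v}$, $\mathbf{v}_{i+1}=\mathbf{v}_i+\mathbf{u}_{i+1}$;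 $\mathit{Term}(\pi)$ is the least $j$ with $p_j\mathbf{v}_j$ terminal ($\infty$ if none). $\mathbb{P}^\sigma_{p\mathbf{v}}$ is the probability measure on computations from $p\mathbf{v}$ under $\sigma$; $\mathbf{n}$ is the vector with all components $n$. $\mathcal{L}(\pi)=\mathit{Term}(\pi)$; $\mathcal{T}[t](\pi)$ is the number of $0\le i<\mathit{Term}(\pi)$ with $(p_i,\mathbf{v}_{i+1}-\mathbf{v}_i,p_{i+1})=t$. An end component is a pair $(C,L)$, $\emptyset\ne C\subseteq Q$, $L\subseteq T$, such that every $p\in C\cap Q_n$ has an outgoing transition in $L$, every $p\in C\cap Q_p$ has all outgoing transitions in $L$, transitions of $L$ have both endpoints in $C$, and the states of $C$ are mutually reachable; MECs are maximal end components. $\mathit{mecs}(\pi)$ is the sequence of MECs visited by $\pi$ in order; a type is a finite sequence $\beta$ of MECs equal to $\mathit{mecs}(\pi)$ for some infinite path $\pi$. $f:\mathbb{N}\to\mathbb{N}$ is an upper estimate of $\mathcal{F}$ for $\beta$ if for every $\varepsilon>0$, $p\in Q$ and strategies $\sigma_1,\sigma_2,\dots$ with $\mathbb{P}^{\sigma_n}_{p\mathbf{n}}[\mathit{mecs}=\beta]>0$ for all $n\ge1$, $\limsup_{n}\mathbb{P}^{\sigma_n}_{p\mathbf{n}}[\mathcal{F}\ge f(n)^{1+\varepsilon}\mid\mathit{mecs}=\beta]=0$; $\mathcal{F}$ is unbounded for $\beta$ if it has no upper estimate for $\beta$. $\mathcal{A}_\sigma$ is the Markov chain obtained by deleting, in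 each $p\in Q_n$, all outgoing transitions other than $\sigma(p)$; a BSCC $\mathbb{B}$ of $\mathcal{A}_\sigma$ (with its states and transitions) is an end component of $\mathcal{A}$, and $\mathbb{B}\subseteq M$ means all its states and transitions belong to MEC $M$. For a fixed state $p_{\mathbb{B}}$ of $\mathbb{B}$, $\mathbb{U}_{\mathbb{B}}$ is the total counter change along the run of $\mathcal{A}_\sigma$ from $p_{\mathbb{B}}$ until its first return to $p_{\mathbb{B}}$; $\mathbb{B}$ is bounded-zero if $\mathbb{E}^\sigma_{p_{\mathbb{B}}}(\mathbb{U}_{\mathbb{B}})=0$ and $\mathbb{P}^\sigma_{p_{\mathbb{B}}}[\mathbb{U}_{\mathbb{B}}=0]=1$. *)

theory Defs
  imports "HOL-Probability.Probability"
begin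

text \<open>A transition (p, u, q) with counter update u.  Since d = 1, updates are integers.\<close>
type_synonym 'q vtrans = "'q \<times> int \<times> 'q"

record 'q vass_mdp =
  states  :: "'q set"
  nstates :: "'q set"                 \<comment> \<open>Q_n; the probabilistic states are Q - Q_n\<close>
  trans   :: "'q vtrans set"
  prob    :: "'q vtrans \<Rightarrow> real"

definition src :: "'q vtrans \<Rightarrow> 'q" where "src t = fst t"
definition upd :: "'q vtrans \<Rightarrow> int" where "upd t = fst (snd t)"
definition tgt :: "'q vtrans \<Rightarrow> 'q" where "tgt t = snd (snd t)"

definition Out :: "'q vass_mdp \<Rightarrow> 'q \<Rightarrow> 'q vtrans set" where
  "Out A p = {t \<in> trans A. src t = p}"

definition vass_mdp :: "'q vass_mdp \<Rightarrow> bool" where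
  "vass_mdp A \<longleftrightarrow>
     finite (states A) \<and> states A \<noteq> {} \<and> nstates A \<subseteq> states A \<and>
     finite (trans A) \<and> (\<forall>t \<in> trans A. src t \<in> states A \<and> tgt t \<in> states A) \<and>
     (\<forall>p \<in> states A. Out A p \<noteq> {}) \<and>
     (\<forall>p \<in> states A - nstates A.
        (\<forall>t \<in> Out A p. prob A t > 0 \<and> prob A t \<in> \<rat>) \<and> (\<Sum>t \<in> Out A p. prob A t) = 1)"

text \<open>A finite path is given by its initial state p0 and its list of transitions;
  an infinite path from p0 is a stream of transitions.\<close>

definition last_state :: "'q \<Rightarrow> 'q vtrans list \<Rightarrow> 'q" where
  "last_state p0 ts = (if ts = [] then p0 else tgt (last ts))"

type_synonym 'q strategy = "'q \<Rightarrow> 'q vtrans list \<Rightarrow> 'q vtrans pmf"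

definition is_strategy :: "'q vass_mdp \<Rightarrow> 'q strategy \<Rightarrow> bool" where
  "is_strategy A \<sigma> \<longleftrightarrow>
     (\<forall>p0 ts. last_state p0 ts \<in> nstates A \<longrightarrow> set_pmf (\<sigma> p0 ts) \<subseteq> Out A (last_state p0 ts))"

definition step_prob :: "'q vass_mdp \<Rightarrow> 'q strategy \<Rightarrow> 'q \<Rightarrow> 'q vtrans list \<Rightarrow> 'q vtrans \<Rightarrow> real" where
  "step_prob A \<sigma> p0 ts t =
     (let q = last_state p0 ts in
      if q \<in> nstates A then pmf (\<sigma> p0 ts) t
      else if t \<in> Out A q then prob A t else 0)"

definition prefix_prob :: "'q vass_mdp \<Rightarrow> 'q strategy \<Rightarrow> 'q \<Rightarrow> 'q vtrans list \<Rightarrow> real" where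
  "prefix_prob A \<sigma> p0 w = (\<Prod>i < length w. step_prob A \<sigma> p0 (take i w) (w ! i))"

definition path_measure :: "'q vass_mdp \<Rightarrow> 'q strategy \<Rightarrow> 'q \<Rightarrow> 'q vtrans stream measure" where
  "path_measure A \<sigma> p0 = (THE \<mu>. prob_space \<mu> \<and>
       sets \<mu> = sets (stream_space (count_space UNIV)) \<and>
       (\<forall>w. emeasure \<mu> (sstart UNIV w) = ennreal (prefix_prob A \<sigma> p0 w)))"

definition state_at :: "'q \<Rightarrow> 'q vtrans stream \<Rightarrow> nat \<Rightarrow> 'q" where
  "state_at p0 \<omega> i = (if i = 0 then p0 else tgt (\<omega> !! (i - 1)))"

definition cnt :: "int \<Rightarrow> 'q vtrans stream \<Rightarrow> nat \<Rightarrow> int" where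
  "cnt v \<omega> i = v + (\<Sum>j < i. upd (\<omega> !! j))"

text \<open>Term (= the random variable L): least j such that the j-th configuration is terminal.\<close>
definition Term :: "int \<Rightarrow> 'q vtrans stream \<Rightarrow> enat" where
  "Term v \<omega> = (if \<exists>j. cnt v \<omega> j < 0 then enat (LEAST j. cnt v \<omega> j < 0) else \<infinity>)"

definition trans_count :: "'q vtrans \<Rightarrow> int \<Rightarrow> 'q vtrans stream \<Rightarrow> enat" where
  "trans_count t v \<omega> =
     (if finite {i. enat i < Term v \<omega> \<and> \<omega> !! i = t}
      then enat (card {i. enat i < Term v \<omega> \<and> \<omega> !! i = t}) else \<infinity>)"

definition edges :: "'q vtrans set \<Rightarrow> ('q \<times> 'q) set" where
  "edges L = (\<lambda>t. (src t, tgt t)) ` L"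

definition is_EC :: "'q vass_mdp \<Rightarrow> 'q set \<Rightarrow> 'q vtrans set \<Rightarrow> bool" where
  "is_EC A C L \<longleftrightarrow>
     C \<noteq> {} \<and> C \<subseteq> states A \<and> L \<subseteq> trans A \<and>
     (\<forall>p \<in> C \<inter> nstates A. \<exists>t \<in> L. src t = p) \<and>
     (\<forall>p \<in> C - nstates A. Out A p \<subseteq> L) \<and>
     (\<forall>t \<in> L. src t \<in> C \<and> tgt t \<in> C) \<and>
     (\<forall>p \<in> C. \<forall>q \<in> C. (p, q) \<in> (edges L)\<^sup>*)"

type_synonym 'q mec = "'q set \<times> 'q vtrans set"

definition is_MEC :: "'q vass_mdp \<Rightarrow> 'q mec \<Rightarrow> bool" where
  "is_MEC A M \<longleftrightarrow> is_EC A (fst M) (snd M) \<and>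
     (\<forall>C' L'. is_EC A C' L' \<and> fst M \<subseteq> C' \<and> snd M \<subseteq> L' \<longrightarrow> C' = fst M \<and> L' = snd M)"

definition mec_of :: "'q vass_mdp \<Rightarrow> 'q \<Rightarrow> 'q mec option" where
  "mec_of A q = (if \<exists>M. is_MEC A M \<and> q \<in> fst M then Some (SOME M. is_MEC A M \<and> q \<in> fst M) else None)"

definition mecs_prefix :: "'q vass_mdp \<Rightarrow> 'q \<Rightarrow> 'q vtrans stream \<Rightarrow> nat \<Rightarrow> 'q mec list" where
  "mecs_prefix A p0 \<omega> n = remdups_adj (List.map_filter (mec_of A) (map (state_at p0 \<omega>) [0..<n]))"

text \<open>mecs(pi) = beta: the sequence of visited MECs is finite and equals beta.\<close>
definition has_mecs :: "'q vass_mdp \<Rightarrow> 'q \<Rightarrow> 'q vtrans stream \<Rightarrow> 'q mec list \<Rightarrow> bool" where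
  "has_mecs A p0 \<omega> \<beta> \<longleftrightarrow> (\<exists>N. \<forall>n \<ge> N. mecs_prefix A p0 \<omega> n = \<beta>)"

definition cond_prob :: "'a measure \<Rightarrow> 'a set \<Rightarrow> 'a set \<Rightarrow> real" where
  "cond_prob \<mu> X Y = measure \<mu> (X \<inter> Y) / measure \<mu> Y"

definition enat_ge_real :: "enat \<Rightarrow> real \<Rightarrow> bool" where
  "enat_ge_real x r = (case x of \<infinity> \<Rightarrow> True | enat k \<Rightarrow> r \<le> real k)"

text \<open>A random variable F on computations from p(n), given as a function of the initial
  counter value and the path.  f is an upper estimate of F for beta.\<close>
definition upper_estimate ::
  "'q vass_mdp \<Rightarrow> (int \<Rightarrow> 'q vtrans stream \<Rightarrow> enat) \<Rightarrow> (nat \<Rightarrow> nat) \<Rightarrow> 'q mec list \<Rightarrow> bool" where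
  "upper_estimate A F f \<beta> \<longleftrightarrow>
     (\<forall>\<epsilon>::real. \<epsilon> > 0 \<longrightarrow> (\<forall>p \<in> states A. \<forall>\<sigma>s :: nat \<Rightarrow> 'q strategy.
        (\<forall>n \<ge> 1. is_strategy A (\<sigma>s n) \<and>
           measure (path_measure A (\<sigma>s n) p)
             {\<omega> \<in> space (path_measure A (\<sigma>s n) p). has_mecs A p \<omega> \<beta>} > 0) \<longrightarrow>
        limsup (\<lambda>n. ereal (cond_prob (path_measure A (\<sigma>s n) p)
            {\<omega> \<in> space (path_measure A (\<sigma>s n) p). enat_ge_real (F (int n) \<omega>) (real (f n) powr (1 + \<epsilon>))}
            {\<omega> \<in> space (path_measure A (\<sigma>s n) p). has_mecs A p \<omega> \<beta>})) = 0))"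

definition unbounded ::
  "'q vass_mdp \<Rightarrow> (int \<Rightarrow> 'q vtrans stream \<Rightarrow> enat) \<Rightarrow> 'q mec list \<Rightarrow> bool" where
  "unbounded A F \<beta> \<longleftrightarrow> \<not> (\<exists>f. upper_estimate A F f \<beta>)"

definition is_MD :: "'q vass_mdp \<Rightarrow> ('q \<Rightarrow> 'q vtrans) \<Rightarrow> bool" where
  "is_MD A \<sigma> \<longleftrightarrow> (\<forall>p \<in> nstates A. \<sigma> p \<in> Out A p)"

definition md_strategy :: "('q \<Rightarrow> 'q vtrans) \<Rightarrow> 'q strategy" where
  "md_strategy \<sigma> = (\<lambda>p0 ts. return_pmf (\<sigma> (last_state p0 ts)))"

definition chain_trans :: "'q vass_mdp \<Rightarrow> ('q \<Rightarrow> 'q vtrans) \<Rightarrow> 'q vtrans set" where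
  "chain_trans A \<sigma> = {t \<in> trans A. src t \<notin> nstates A \<or> t = \<sigma> (src t)}"

definition is_BSCC :: "'q vass_mdp \<Rightarrow> ('q \<Rightarrow> 'q vtrans) \<Rightarrow> 'q set \<Rightarrow> bool" where
  "is_BSCC A \<sigma> B \<longleftrightarrow> B \<noteq> {} \<and> B \<subseteq> states A \<and>
     (\<forall>p \<in> B. \<forall>q \<in> B. (p, q) \<in> (edges (chain_trans A \<sigma>))\<^sup>*) \<and>
     (\<forall>t \<in> chain_trans A \<sigma>. src t \<in> B \<longrightarrow> tgt t \<in> B)"

definition bscc_trans :: "'q vass_mdp \<Rightarrow> ('q \<Rightarrow> 'q vtrans) \<Rightarrow> 'q set \<Rightarrow> 'q vtrans set" where
  "bscc_trans A \<sigma> B = {t \<in> chain_trans A \<sigma>. src t \<in> B}"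

definition bscc_in_mec :: "'q vass_mdp \<Rightarrow> ('q \<Rightarrow> 'q vtrans) \<Rightarrow> 'q set \<Rightarrow> 'q mec \<Rightarrow> bool" where
  "bscc_in_mec A \<sigma> B M \<longleftrightarrow> B \<subseteq> fst M \<and> bscc_trans A \<sigma> B \<subseteq> snd M"

definition returns :: "'q \<Rightarrow> 'q vtrans stream \<Rightarrow> bool" where
  "returns pB \<omega> \<longleftrightarrow> (\<exists>k > 0. state_at pB \<omega> k = pB)"

definition return_time :: "'q \<Rightarrow> 'q vtrans stream \<Rightarrow> nat" where
  "return_time pB \<omega> = (LEAST k. k > 0 \<and> state_at pB \<omega> k = pB)"

definition U_ret :: "'q \<Rightarrow> 'q vtrans stream \<Rightarrow> real" where
  "U_ret pB \<omega> = real_of_int (\<Sum>j < return_time pB \<omega>. upd (\<omega> !! j))"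

definition bounded_zero :: "'q vass_mdp \<Rightarrow> ('q \<Rightarrow> 'q vtrans) \<Rightarrow> 'q set \<Rightarrow> bool" where
  "bounded_zero A \<sigma> B \<longleftrightarrow> (\<exists>pB \<in> B.
     (let \<mu> = path_measure A (md_strategy \<sigma>) pB in
       (\<integral>\<omega>. U_ret pB \<omega> \<partial>\<mu>) = 0 \<and>
       measure \<mu> {\<omega> \<in> space \<mu>. returns pB \<omega> \<and> U_ret pB \<omega> = 0} = 1))"

end

theory Submission
  imports Defs
begin

text \<open>
  Fix the state \<open>pB\<close> of the bounded-zero BSCC \<open>B\<close> and run the Markov chain of \<open>\<sigma>\<close> from it.
  A cycle through \<open>pB\<close> with nonzero counter change would, cut at its first return to \<open>pB\<close>,
  be an excursion of positive probability with \<open>U\<^sub>B \<noteq> 0\<close>; so every such cycle has counter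
  change 0, and closing an arbitrary path of the chain by a fixed path back to \<open>pB\<close> shows that
  the counter never drops by more than some constant \<open>K\<close>.  Hence from \<open>pB(n)\<close> with \<open>n \<ge> K\<close>
  the run almost surely never terminates and stays in \<open>B \<subseteq> M\<close>; and since the chain on the finite
  strongly connected set \<open>B\<close> almost surely takes each transition of \<open>B\<close> infinitely often,
  also \<open>T[t] = \<infinity>\<close> almost surely.  For all large \<open>n\<close> the events \<open>L \<ge> f(n)\<^sup>2\<close> and
  \<open>T[t] \<ge> f(n)\<^sup>2\<close> thus have conditional probability 1, so no \<open>f\<close> is an upper estimate.

  The Markov chain is realised by an i.i.d. sequence of random choice functions \<open>g : Q \<rightarrow> T\<close>,
  the \<open>i\<close>-th of which decides the \<open>i\<close>-th step; this measure has the cylinder probabilities of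
  the path measure and therefore coincides with it.
\<close>

section \<open>Blocks in i.i.d. streams\<close>

lemma prob_stream_pmf_Cons:
  fixes K :: "'a pmf"
  assumes [measurable]: "Measurable.pred (stream_space (measure_pmf K)) P"
  shows "ennreal (\<P>(x in stream_space (measure_pmf K). P x)) =
    (\<integral>\<^sup>+t. ennreal (\<P>(x in stream_space (measure_pmf K). P (t ## x))) \<partial>measure_pmf K)"
  by (rule prob_space.prob_stream_space[OF prob_space_measure_pmf]) (rule predE[OF assms])

lemma pred_snth_mem:
  fixes K :: "'a pmf"
  shows "Measurable.pred (stream_space (measure_pmf K)) (\<lambda>x. x !! i \<in> E)"
proof -
  have "(\<lambda>y. y \<in> E) \<in> measure_pmf K \<rightarrow>\<^sub>M count_space UNIV" by simp
  then show ?thesis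
    by (rule measurable_compose[OF measurable_snth])
qed

lemma pred_all_less:
  "(\<And>i. Measurable.pred M (P i)) \<Longrightarrow> Measurable.pred M (\<lambda>x. \<forall>i<(n::nat). P i x)"
  by (intro pred_intros_countable(1) pred_intros_imp')

lemma pred_sdrop:
  fixes K :: "'a pmf"
  shows "Measurable.pred (stream_space (measure_pmf K)) Q \<Longrightarrow> Measurable.pred (stream_space (measure_pmf K)) (\<lambda>x. Q (sdrop k x))"
  by (rule measurable_compose[OF measurable_sdrop])

lemma pred_prefix_mem_sdrop:
  fixes K :: "'a pmf"
  assumes "Measurable.pred (stream_space (measure_pmf K)) Q"
  shows "Measurable.pred (stream_space (measure_pmf K)) (\<lambda>x. (\<forall>i<L. x !! i \<in> E) \<and> Q (sdrop L x))"
  by (intro pred_intros_logic(3) pred_all_less pred_snth_mem pred_sdrop assms)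

lemma prob_stream_pmf_sdrop:
  fixes K :: "'a pmf"
  assumes [measurable]: "Measurable.pred (stream_space (measure_pmf K)) Q"
  shows "\<P>(x in stream_space (measure_pmf K). Q (sdrop k x)) = \<P>(x in stream_space (measure_pmf K). Q x)"
proof (induction k)
  case 0 then show ?case by simp
next
  case (Suc k)
  have "ennreal (\<P>(x in stream_space (measure_pmf K). Q (sdrop (Suc k) x))) =
    (\<integral>\<^sup>+t. ennreal (\<P>(x in stream_space (measure_pmf K). Q (sdrop (Suc k) (t ## x)))) \<partial>measure_pmf K)"
    by (rule prob_stream_pmf_Cons) (rule pred_sdrop[OF assms])
  also have "\<dots> = (\<integral>\<^sup>+t. ennreal (\<P>(x in stream_space (measure_pmf K). Q (sdrop k x))) \<partial>measure_pmf K)"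
    by simp
  also have "\<dots> = ennreal (\<P>(x in stream_space (measure_pmf K). Q x))"
    by (simp add: Suc measure_pmf.emeasure_space_1)
  finally show ?case by (simp add: measure_nonneg)
qed

lemma prob_stream_pmf_prefix:
  fixes K :: "'a pmf"
  assumes [measurable]: "Measurable.pred (stream_space (measure_pmf K)) Q"
  shows "\<P>(x in stream_space (measure_pmf K). (\<forall>i<L. x !! i \<in> E) \<and> Q (sdrop L x)) =
    measure_pmf.prob K E ^ L * \<P>(x in stream_space (measure_pmf K). Q x)"
proof (induction L)
  case 0 then show ?case by simp
next
  case (Suc L)
  have eq: "\<And>t x. (\<forall>i<Suc L. (t ## x) !! i \<in> E) \<longleftrightarrow> t \<in> E \<and> (\<forall>i<L. x !! i \<in> E)"
    by (simp only: All_less_Suc2 snth.simps stream.sel)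
  have "ennreal (\<P>(x in stream_space (measure_pmf K). (\<forall>i<Suc L. x !! i \<in> E) \<and> Q (sdrop (Suc L) x))) =
    (\<integral>\<^sup>+t. ennreal (\<P>(x in stream_space (measure_pmf K). (\<forall>i<Suc L. (t ## x) !! i \<in> E) \<and> Q (sdrop (Suc L) (t ## x)))) \<partial>measure_pmf K)"
    by (rule prob_stream_pmf_Cons) (rule pred_prefix_mem_sdrop[OF assms])
  also have "\<dots> = (\<integral>\<^sup>+t. ennreal (\<P>(x in stream_space (measure_pmf K). (\<forall>i<L. x !! i \<in> E) \<and> Q (sdrop L x))) * indicator E t \<partial>measure_pmf K)"
    by (intro nn_integral_cong) (simp add: eq split: split_indicator)
  also have "\<dots> = ennreal (\<P>(x in stream_space (measure_pmf K). (\<forall>i<L. x !! i \<in> E) \<and> Q (sdrop L x))) * emeasure (measure_pmf K) E"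
    by (simp add: nn_integral_cmult_indicator)
  also have "\<dots> = ennreal (measure_pmf.prob K E ^ Suc L * \<P>(x in stream_space (measure_pmf K). Q x))"
    by (simp add: Suc measure_pmf.emeasure_eq_measure ennreal_mult'' measure_nonneg mult_ac)
  finally show ?case by (simp add: measure_nonneg)
qed

definition block_in :: "nat \<Rightarrow> 'a set \<Rightarrow> nat \<Rightarrow> 'a stream \<Rightarrow> bool" where
  "block_in L E j x \<longleftrightarrow> (\<forall>i<L. x !! (j * L + i) \<in> E)"

lemma pred_block_in:
  fixes K :: "'a pmf"
  shows "Measurable.pred (stream_space (measure_pmf K)) (block_in L E j)"
  unfolding block_in_def by (intro pred_all_less pred_snth_mem)

lemma pred_no_block:
  fixes K :: "'a pmf"
  shows "Measurable.pred (stream_space (measure_pmf K)) (\<lambda>x. \<forall>j<m. \<not> block_in L E j x)"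
  by (intro pred_all_less pred_intros_logic(2) pred_block_in)

lemma block_in_sdrop: "block_in L E j (sdrop (a * L) x) = block_in L E (a + j) x"
  by (simp add: block_in_def sdrop_snth algebra_simps)

lemma prob_stream_pmf_no_block:
  fixes K :: "'a pmf"
  shows "\<P>(x in stream_space (measure_pmf K). \<forall>j<m. \<not> block_in L E j x) =
    (1 - measure_pmf.prob K E ^ L) ^ m"
proof (induction m)
  case 0
  then show ?case using prob_space.prob_space[OF prob_space.prob_space_stream_space[OF prob_space_measure_pmf]]
    by (simp add: space_stream_space)
next
  case (Suc m)
  let ?S = "stream_space (measure_pmf K)"
  let ?first = "\<lambda>x. \<forall>i<L. x !! i \<in> E"
  let ?Q = "\<lambda>x. \<forall>j<m. \<not> block_in L E j x"
  interpret S: prob_space ?S by (rule prob_space.prob_space_stream_space[OF prob_space_measure_pmf])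
  have Suc_eq: "(\<forall>j<Suc m. \<not> block_in L E j x) \<longleftrightarrow> \<not> ?first x \<and> ?Q (sdrop L x)" for x
    using block_in_sdrop[of L E _ 1 x] by (simp only: All_less_Suc2) (simp add: block_in_def)
  have "{x \<in> space ?S. ?Q (sdrop L x)} =
      {x \<in> space ?S. ?first x \<and> ?Q (sdrop L x)} \<union> {x \<in> space ?S. \<not> ?first x \<and> ?Q (sdrop L x)}"
    by (simp only: set_eq_iff mem_Collect_eq Un_iff) meson
  moreover have "{x \<in> space ?S. ?first x \<and> ?Q (sdrop L x)} \<in> sets ?S"
    by (intro predE pred_prefix_mem_sdrop pred_no_block)
  moreover have "{x \<in> space ?S. \<not> ?first x \<and> ?Q (sdrop L x)} \<in> sets ?S"
    by (intro predE pred_intros_logic(3,2) pred_sdrop pred_all_less pred_snth_mem pred_no_block)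
  ultimately have "\<P>(x in ?S. ?Q (sdrop L x)) =
      \<P>(x in ?S. ?first x \<and> ?Q (sdrop L x)) + \<P>(x in ?S. \<not> ?first x \<and> ?Q (sdrop L x))"
    by (subst S.finite_measure_Union[symmetric]) (auto simp only: Int_iff mem_Collect_eq disjoint_iff)
  moreover have "\<P>(x in ?S. ?Q (sdrop L x)) = \<P>(x in ?S. ?Q x)"
    by (rule prob_stream_pmf_sdrop[OF pred_no_block])
  moreover have "\<P>(x in ?S. ?first x \<and> ?Q (sdrop L x)) = measure_pmf.prob K E ^ L * \<P>(x in ?S. ?Q x)"
    by (rule prob_stream_pmf_prefix[OF pred_no_block])
  ultimately have "\<P>(x in ?S. \<not> ?first x \<and> ?Q (sdrop L x)) = (1 - measure_pmf.prob K E ^ L) * \<P>(x in ?S. ?Q x)"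
    by (simp add: algebra_simps)
  then show ?case by (simp add: Suc_eq Suc)
qed

lemma AE_stream_pmf_block_in_infinitely_often:
  fixes K :: "'a pmf"
  assumes pos: "measure_pmf.prob K E > 0"
  shows "AE x in stream_space (measure_pmf K). \<forall>a. \<exists>j\<ge>a. block_in L E j x"
proof -
  let ?S = "stream_space (measure_pmf K)"
  interpret S: prob_space ?S by (rule prob_space.prob_space_stream_space[OF prob_space_measure_pmf])
  let ?c = "measure_pmf.prob K E ^ L"
  have c: "0 < ?c" "?c \<le> 1" using pos by (auto intro: power_le_one)
  show ?thesis unfolding AE_all_countable
  proof
    fix a
    let ?N = "{x \<in> space ?S. \<not> (\<exists>j\<ge>a. block_in L E j x)}"
    have N: "?N \<in> sets ?S"
      by (intro predE pred_intros_logic(2) pred_intros_countable(2) pred_intros_conj1' pred_block_in)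
    have N_le: "S.prob ?N \<le> (1 - ?c) ^ m" for m
    proof -
      have "?N \<subseteq> {x \<in> space ?S. \<forall>j<m. \<not> block_in L E j (sdrop (a * L) x)}"
        by (auto simp: block_in_sdrop)
      then have "S.prob ?N \<le> \<P>(x in ?S. \<forall>j<m. \<not> block_in L E j (sdrop (a * L) x))"
        by (intro S.finite_measure_mono predE pred_sdrop pred_no_block)
      also have "\<dots> = \<P>(x in ?S. \<forall>j<m. \<not> block_in L E j x)"
        by (rule prob_stream_pmf_sdrop[OF pred_no_block])
      finally show ?thesis by (simp add: prob_stream_pmf_no_block)
    qed
    have "(\<lambda>m. (1 - ?c) ^ m) \<longlonglongrightarrow> 0"
      using c by (intro LIMSEQ_power_zero) auto
    then have "S.prob ?N \<le> 0"
      using N_le by (intro LIMSEQ_le_const) auto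
    then have "emeasure ?S ?N = 0"
      by (simp add: S.emeasure_eq_measure measure_nonneg antisym)
    then show "AE x in ?S. \<exists>j\<ge>a. block_in L E j x"
      by (intro AE_I[where N="?N"] N) auto
  qed
qed

section \<open>Paths, counters and measurable events\<close>

lemma stream_eqI_snth: "(\<And>n. s !! n = s' !! n) \<Longrightarrow> s = s'"
  by (metis stream_smap_nats ext)

lemma sstart_restrict: "xs \<in> lists S \<Longrightarrow> sstart S xs = sstart UNIV xs \<inter> streams S"
proof (intro equalityI subsetI IntI)
  fix x assume a: "xs \<in> lists S" "x \<in> sstart S xs"
  from sstart_in_streams[OF a(1)] a(2) show xs: "x \<in> streams S" by (rule subsetD)
  have "\<forall>i<length xs. x !! i = xs ! i" using sstart_eq[OF xs, of xs] a(2) by simp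
  then show "x \<in> sstart UNIV xs" using sstart_eq[of x UNIV xs] by simp
next
  fix x assume "xs \<in> lists S" "x \<in> sstart UNIV xs \<inter> streams S"
  then have "\<forall>i<length xs. x !! i = xs ! i" "x \<in> streams S"
    using sstart_eq[of x UNIV xs] by auto
  then show "x \<in> sstart S xs" using sstart_eq[of x S xs] by simp
qed

lemma sstart_stake: "\<omega> \<in> sstart UNIV c \<Longrightarrow> stake (length c) \<omega> = c"
  using sstart_eq[of \<omega> UNIV c] by (simp add: list_eq_iff_nth_eq)

lemma stake_smap_eqD: "stake n (smap e \<omega>) = stake n (smap e \<omega>') \<Longrightarrow> i < n \<Longrightarrow> e (\<omega> !! i) = e (\<omega>' !! i)"
proof -
  assume H: "stake n (smap e \<omega>) = stake n (smap e \<omega>')" "i < n"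
  then have "stake n (smap e \<omega>) ! i = stake n (smap e \<omega>') ! i" by simp
  then show ?thesis using H(2) by (simp only: stake_nth snth_smap)
qed

lemma stake_snth_sum: "(\<Sum>j<n. f (\<omega> !! j)) = sum_list (map f (stake n \<omega>))"
  by (induction n) (simp_all add: stake_Suc del: stake.simps(2))

lemma last_state_Cons: "last_state p (t # w) = last_state (tgt t) w"
  by (simp add: last_state_def)

lemma last_state_append: "last_state q (u @ v) = last_state (last_state q u) v"
  by (simp add: last_state_def)

lemma last_state_snoc: "last_state q (u @ [t]) = tgt t"
  by (simp add: last_state_def)

lemma state_at_stake: "state_at p \<omega> k = last_state p (stake k \<omega>)"
  by (cases k) (simp_all add: state_at_def last_state_def stake_Suc del: stake.simps(2))

lemma U_ret_sstart_first_return: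
  assumes \<omega>: "\<omega> \<in> sstart UNIV c" and c: "c \<noteq> []" "last_state p c = p"
    and first: "\<forall>k. 0 < k \<and> k < length c \<longrightarrow> last_state p (take k c) \<noteq> p"
  shows "U_ret p \<omega> = real_of_int (sum_list (map upd c))"
proof -
  have c_prefix: "stake (length c) \<omega> = c" by (rule sstart_stake[OF \<omega>])
  then have prefix: "k \<le> length c \<Longrightarrow> stake k \<omega> = take k c" for k
    by (metis take_stake min.absorb1)
  have "return_time p \<omega> = length c"
    unfolding return_time_def
  proof (rule Least_equality)
    show "0 < length c \<and> state_at p \<omega> (length c) = p"
      using c by (simp add: state_at_stake c_prefix)
    fix k assume k: "0 < k \<and> state_at p \<omega> k = p"
    show "length c \<le> k"
    proof (rule ccontr)
      assume "\<not> length c \<le> k"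
      then have "state_at p \<omega> k = last_state p (take k c)" by (simp add: state_at_stake prefix)
      then show False using first k \<open>\<not> length c \<le> k\<close> by auto
    qed
  qed
  then show ?thesis
    by (simp add: U_ret_def stake_snth_sum c_prefix)
qed

lemma cnt_stake: "cnt v \<omega> j = v + sum_list (map upd (stake j \<omega>))"
  by (simp add: cnt_def stake_snth_sum)

lemma cnt_cong: "(\<And>i. i < j \<Longrightarrow> upd (\<omega> !! i) = upd (\<omega>' !! i)) \<Longrightarrow> cnt v \<omega> j = cnt v \<omega>' j"
  by (simp add: cnt_def)

lemma Term_eq_infinity:
  assumes "\<forall>j. - int K \<le> sum_list (map upd (stake j \<omega>))" "K \<le> n"
  shows "Term (int n) \<omega> = \<infinity>"
proof -
  have "\<not> cnt (int n) \<omega> j < 0" for j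
    using assms(1)[rule_format, of j] assms(2) by (simp add: cnt_stake)
  then show ?thesis by (simp add: Term_def)
qed

lemma map_filter_const: "(\<forall>x\<in>set xs. f x = Some y) \<Longrightarrow> List.map_filter f xs = replicate (length xs) y"
  by (induction xs) simp_all

lemma map_filter_map_cong:
  "(\<And>x. x \<in> set xs \<Longrightarrow> f (g x) = f (g' x)) \<Longrightarrow> List.map_filter f (map g xs) = List.map_filter f (map g' xs)"
  by (induction xs) (auto split: option.split)

lemma pred_determined_by_stake:
  fixes e :: "'a \<Rightarrow> 'c::countable"
  assumes dep: "\<And>\<omega> \<omega>'. stake n (smap e \<omega>) = stake n (smap e \<omega>') \<Longrightarrow> P \<omega> = P \<omega>'"
  shows "Measurable.pred (stream_space (count_space UNIV)) P"
proof -
  define P' where "P' xs = (\<exists>\<omega>. stake n (smap e \<omega>) = xs \<and> P \<omega>)" for xs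
  have eq: "P = (\<lambda>\<omega>. P' (stake n (smap e \<omega>)))"
  proof
    fix \<omega> show "P \<omega> = P' (stake n (smap e \<omega>))"
    proof
      assume "P \<omega>" then show "P' (stake n (smap e \<omega>))" unfolding P'_def by blast
    next
      assume "P' (stake n (smap e \<omega>))"
      then obtain \<omega>' where "stake n (smap e \<omega>') = stake n (smap e \<omega>)" "P \<omega>'" unfolding P'_def by blast
      then show "P \<omega>" using dep[of \<omega>' \<omega>] by simp
    qed
  qed
  have m: "(\<lambda>\<omega>. stake n (smap e \<omega>)) \<in> stream_space (count_space UNIV) \<rightarrow>\<^sub>M count_space UNIV"
    by (rule measurable_compose[OF measurable_smap measurable_stake]) simp
  show ?thesis unfolding eq by (rule measurable_compose[OF m]) simp
qed

lemma enat_ge_real_Term_iff: "enat_ge_real (Term v \<omega>) r \<longleftrightarrow> (\<forall>j. real j < r \<longrightarrow> 0 \<le> cnt v \<omega> j)"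
proof (cases "\<exists>j. cnt v \<omega> j < 0")
  case True
  let ?k = "LEAST j. cnt v \<omega> j < 0"
  have k: "cnt v \<omega> ?k < 0" using True by (rule LeastI_ex)
  have "r \<le> real ?k \<longleftrightarrow> (\<forall>j. real j < r \<longrightarrow> 0 \<le> cnt v \<omega> j)"
  proof
    assume rk: "r \<le> real ?k"
    show "\<forall>j. real j < r \<longrightarrow> 0 \<le> cnt v \<omega> j"
    proof (intro allI impI)
      fix j assume "real j < r"
      then have "j < ?k" using rk by simp
      then have "\<not> cnt v \<omega> j < 0" by (rule not_less_Least)
      then show "0 \<le> cnt v \<omega> j" by simp
    qed
  next
    assume "\<forall>j. real j < r \<longrightarrow> 0 \<le> cnt v \<omega> j"
    then have "\<not> real ?k < r" using k by force
    then show "r \<le> real ?k" by simp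
  qed
  then show ?thesis using True by (simp add: Term_def enat_ge_real_def)
next
  case False
  then have "Term v \<omega> = \<infinity>" by (simp add: Term_def)
  then show ?thesis using False by (simp add: enat_ge_real_def not_less)
qed

lemma pred_Term_ge: "Measurable.pred (stream_space (count_space UNIV)) (\<lambda>\<omega>. enat_ge_real (Term v \<omega>) r)"
  unfolding enat_ge_real_Term_iff
proof (intro pred_intros_countable(1) pred_intros_imp')
  fix j
  show "Measurable.pred (stream_space (count_space UNIV)) (\<lambda>\<omega>. 0 \<le> cnt v \<omega> j)"
    by (rule pred_determined_by_stake[where e=upd and n=j]) (metis cnt_cong stake_smap_eqD)
qed

lemma enat_less_Term_iff: "enat i < Term v \<omega> \<longleftrightarrow> (\<forall>j\<le>i. 0 \<le> cnt v \<omega> j)"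
proof (cases "\<exists>j. cnt v \<omega> j < 0")
  case True
  let ?k = "LEAST j. cnt v \<omega> j < 0"
  have k: "cnt v \<omega> ?k < 0" using True by (rule LeastI_ex)
  have "i < ?k \<longleftrightarrow> (\<forall>j\<le>i. 0 \<le> cnt v \<omega> j)"
  proof
    assume ik: "i < ?k"
    show "\<forall>j\<le>i. 0 \<le> cnt v \<omega> j"
    proof (intro allI impI)
      fix j assume "j \<le> i"
      then have "j < ?k" using ik by simp
      then have "\<not> cnt v \<omega> j < 0" by (rule not_less_Least)
      then show "0 \<le> cnt v \<omega> j" by simp
    qed
  next
    assume "\<forall>j\<le>i. 0 \<le> cnt v \<omega> j"
    then have "\<not> ?k \<le> i" using k by force
    then show "i < ?k" by simp
  qed
  then show ?thesis using True by (simp add: Term_def)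
next
  case False
  then have "Term v \<omega> = \<infinity>" by (simp add: Term_def)
  then show ?thesis using False by (simp add: not_less)
qed

lemma enat_ge_real_trans_count_iff:
  "enat_ge_real (trans_count t v \<omega>) r \<longleftrightarrow>
     (\<exists>m. r \<le> real (card {i. i < m \<and> (\<forall>j\<le>i. 0 \<le> cnt v \<omega> j) \<and> \<omega> !! i = t}))"
proof -
  define S where "S = {i. (\<forall>j\<le>i. 0 \<le> cnt v \<omega> j) \<and> \<omega> !! i = t}"
  have S': "{i. enat i < Term v \<omega> \<and> \<omega> !! i = t} = S" by (simp add: S_def enat_less_Term_iff)
  have Sm: "{i. i < m \<and> (\<forall>j\<le>i. 0 \<le> cnt v \<omega> j) \<and> \<omega> !! i = t} = S \<inter> {..<m}" for m
    by (auto simp: S_def)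
  show ?thesis
  proof (cases "finite S")
    case True
    then obtain m0 where m0: "S \<subseteq> {..<m0}" using finite_nat_bounded by blast
    have "r \<le> real (card S) \<longleftrightarrow> (\<exists>m. r \<le> real (card (S \<inter> {..<m})))"
    proof
      assume "r \<le> real (card S)"
      moreover have "S \<inter> {..<m0} = S" using m0 by blast
      ultimately show "\<exists>m. r \<le> real (card (S \<inter> {..<m}))" by metis
    next
      assume "\<exists>m. r \<le> real (card (S \<inter> {..<m}))"
      then obtain m where "r \<le> real (card (S \<inter> {..<m}))" by blast
      moreover have "card (S \<inter> {..<m}) \<le> card S" using True by (intro card_mono) auto
      ultimately show "r \<le> real (card S)" by linarith
    qed
    then show ?thesis using True by (simp add: trans_count_def S' enat_ge_real_def Sm)
  next
    case False
    obtain Bs where Bs: "finite Bs" "card Bs = nat \<lceil>r\<rceil>" "Bs \<subseteq> S"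
      using infinite_arbitrarily_large[OF False] by blast
    obtain m where m: "Bs \<subseteq> {..<m}" using finite_nat_bounded[OF Bs(1)] by blast
    have "card Bs \<le> card (S \<inter> {..<m})" using Bs m by (intro card_mono) auto
    then have "r \<le> real (card (S \<inter> {..<m}))" using Bs(2) by linarith
    then show ?thesis using False by (auto simp: trans_count_def S' enat_ge_real_def Sm)
  qed
qed

lemma pred_trans_count_ge: "Measurable.pred (stream_space (count_space UNIV)) (\<lambda>\<omega>. enat_ge_real (trans_count t v \<omega>) r)"
  unfolding enat_ge_real_trans_count_iff
proof (intro pred_intros_countable(2))
  fix m
  show "Measurable.pred (stream_space (count_space UNIV))
     (\<lambda>\<omega>. r \<le> real (card {i. i < m \<and> (\<forall>j\<le>i. 0 \<le> cnt v \<omega> j) \<and> \<omega> !! i = t}))"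
  proof (rule pred_determined_by_stake[where e="\<lambda>x. (x = t, upd x)" and n=m])
    fix \<omega> \<omega>' :: "'a vtrans stream"
    assume H: "stake m (smap (\<lambda>x. (x = t, upd x)) \<omega>) = stake m (smap (\<lambda>x. (x = t, upd x)) \<omega>')"
    have e: "i < m \<Longrightarrow> (\<omega> !! i = t) = (\<omega>' !! i = t) \<and> upd (\<omega> !! i) = upd (\<omega>' !! i)" for i
      using stake_smap_eqD[OF H, of i] by simp
    have "{i. i < m \<and> (\<forall>j\<le>i. 0 \<le> cnt v \<omega> j) \<and> \<omega> !! i = t} =
          {i. i < m \<and> (\<forall>j\<le>i. 0 \<le> cnt v \<omega>' j) \<and> \<omega>' !! i = t}"
    proof (intro Collect_cong conj_cong refl)
      fix i assume i: "i < m"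
      show "(\<forall>j\<le>i. 0 \<le> cnt v \<omega> j) = (\<forall>j\<le>i. 0 \<le> cnt v \<omega>' j)"
      proof (intro all_cong imp_cong refl)
        fix j assume "j \<le> i"
        then have "cnt v \<omega> j = cnt v \<omega>' j" using i e by (intro cnt_cong) auto
        then show "(0 \<le> cnt v \<omega> j) = (0 \<le> cnt v \<omega>' j)" by simp
      qed
      show "(\<omega> !! i = t) = (\<omega>' !! i = t)" using e[OF i] by simp
    qed
    then show "(r \<le> real (card {i. i < m \<and> (\<forall>j\<le>i. 0 \<le> cnt v \<omega> j) \<and> \<omega> !! i = t})) =
               (r \<le> real (card {i. i < m \<and> (\<forall>j\<le>i. 0 \<le> cnt v \<omega>' j) \<and> \<omega>' !! i = t}))" by simp
  qed
qed

section \<open>Maximal end components\<close>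

lemma edges_mono: "L \<subseteq> L' \<Longrightarrow> edges L \<subseteq> edges L'"
  by (auto simp: edges_def)

lemma is_EC_Un:
  assumes E1: "is_EC A C L" and E2: "is_EC A C' L'" and x: "x \<in> C" "x \<in> C'"
  shows "is_EC A (C \<union> C') (L \<union> L')"
proof -
  have r1: "(p, q) \<in> (edges (L \<union> L'))\<^sup>*" if "p \<in> C" "q \<in> C" for p q
    using E1 that rtrancl_mono[OF edges_mono[of L "L \<union> L'"]] unfolding is_EC_def by blast
  have r2: "(p, q) \<in> (edges (L \<union> L'))\<^sup>*" if "p \<in> C'" "q \<in> C'" for p q
    using E2 that rtrancl_mono[OF edges_mono[of L' "L \<union> L'"]] unfolding is_EC_def by blast
  have conn: "(p, q) \<in> (edges (L \<union> L'))\<^sup>*" if "p \<in> C \<union> C'" "q \<in> C \<union> C'" for p q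
  proof -
    have "(p, x) \<in> (edges (L \<union> L'))\<^sup>*" using that(1) r1 r2 x by blast
    moreover have "(x, q) \<in> (edges (L \<union> L'))\<^sup>*" using that(2) r1 r2 x by blast
    ultimately show ?thesis by (rule rtrancl_trans)
  qed
  have a1: "C \<noteq> {}" "C \<subseteq> states A" "L \<subseteq> trans A"
    "\<forall>p \<in> C \<inter> nstates A. \<exists>t \<in> L. src t = p" "\<forall>p \<in> C - nstates A. Out A p \<subseteq> L"
    "\<forall>t \<in> L. src t \<in> C \<and> tgt t \<in> C" using E1 unfolding is_EC_def by simp_all
  have a2: "C' \<subseteq> states A" "L' \<subseteq> trans A"
    "\<forall>p \<in> C' \<inter> nstates A. \<exists>t \<in> L'. src t = p" "\<forall>p \<in> C' - nstates A. Out A p \<subseteq> L'"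
    "\<forall>t \<in> L'. src t \<in> C' \<and> tgt t \<in> C'" using E2 unfolding is_EC_def by simp_all
  have "\<forall>p \<in> (C \<union> C') \<inter> nstates A. \<exists>t \<in> L \<union> L'. src t = p" using a1(4) a2(3) by blast
  moreover have "\<forall>p \<in> (C \<union> C') - nstates A. Out A p \<subseteq> L \<union> L'" using a1(5) a2(4) by blast
  moreover have "\<forall>t \<in> L \<union> L'. src t \<in> C \<union> C' \<and> tgt t \<in> C \<union> C'" using a1(6) a2(5) by blast
  ultimately show ?thesis
    unfolding is_EC_def using a1(1,2,3) a2(1,2) conn by auto
qed

lemma is_MEC_unique:
  assumes "is_MEC A M" "is_MEC A M'" "q \<in> fst M" "q \<in> fst M'"
  shows "M = M'"
proof -
  have U: "is_EC A (fst M \<union> fst M') (snd M \<union> snd M')"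
    using assms by (intro is_EC_Un[of A _ _ _ _ q]) (auto simp: is_MEC_def)
  then have "fst M \<union> fst M' = fst M \<and> snd M \<union> snd M' = snd M"
    using assms(1) unfolding is_MEC_def by blast
  moreover have "fst M \<union> fst M' = fst M' \<and> snd M \<union> snd M' = snd M'"
    using assms(2) U unfolding is_MEC_def by blast
  ultimately show ?thesis by (simp add: prod_eq_iff)
qed

lemma mec_of_eq_Some: "is_MEC A M \<Longrightarrow> q \<in> fst M \<Longrightarrow> mec_of A q = Some M"
proof -
  assume a: "is_MEC A M" "q \<in> fst M"
  then have ex: "\<exists>M. is_MEC A M \<and> q \<in> fst M" by blast
  have "is_MEC A (SOME M. is_MEC A M \<and> q \<in> fst M) \<and> q \<in> fst (SOME M. is_MEC A M \<and> q \<in> fst M)"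
    by (rule someI_ex[OF ex])
  then have "(SOME M. is_MEC A M \<and> q \<in> fst M) = M" using is_MEC_unique[OF _ a(1) _ a(2)] by blast
  then show ?thesis using ex by (simp add: mec_of_def)
qed

section \<open>Refuting upper estimates\<close>

lemma cond_prob_eq_1_if_AE:
  assumes "prob_space \<mu>"
    and P: "{\<omega> \<in> space \<mu>. P \<omega>} \<in> sets \<mu>" and Q: "{\<omega> \<in> space \<mu>. Q \<omega>} \<in> sets \<mu>"
    and "AE \<omega> in \<mu>. P \<omega>" "AE \<omega> in \<mu>. Q \<omega>"
  shows "cond_prob \<mu> {\<omega> \<in> space \<mu>. P \<omega>} {\<omega> \<in> space \<mu>. Q \<omega>} = 1"
proof -
  interpret prob_space \<mu> by fact
  have PQ: "{\<omega> \<in> space \<mu>. P \<omega>} \<inter> {\<omega> \<in> space \<mu>. Q \<omega>} = {\<omega> \<in> space \<mu>. P \<omega> \<and> Q \<omega>}"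
    by blast
  have "prob {\<omega> \<in> space \<mu>. P \<omega> \<and> Q \<omega>} = 1"
    using assms(4,5) sets.Int[OF P Q] by (simp add: PQ prob_Collect_eq_1)
  moreover have "prob {\<omega> \<in> space \<mu>. Q \<omega>} = 1"
    using assms(5) Q by (simp add: prob_Collect_eq_1)
  ultimately show ?thesis by (simp add: cond_prob_def PQ)
qed

lemma not_upper_estimate_if_cond_prob_eventually_1:
  fixes A :: "'q vass_mdp" and \<tau> :: "'q strategy" and p :: 'q
  defines "\<mu> \<equiv> path_measure A \<tau> p"
  assumes p: "p \<in> states A" and \<tau>: "is_strategy A \<tau>"
    and mecs_pos: "measure \<mu> {\<omega> \<in> space \<mu>. has_mecs A p \<omega> \<beta>} > 0"
    and cond_1: "\<forall>\<^sub>F n in sequentially. \<forall>r. cond_prob \<mu> {\<omega> \<in> space \<mu>. enat_ge_real (F (int n) \<omega>) r}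
        {\<omega> \<in> space \<mu>. has_mecs A p \<omega> \<beta>} = 1"
  shows "\<not> upper_estimate A F f \<beta>"
proof
  let ?c = "\<lambda>n. ereal (cond_prob \<mu> {\<omega> \<in> space \<mu>. enat_ge_real (F (int n) \<omega>) (real (f n) powr (1 + 1))}
      {\<omega> \<in> space \<mu>. has_mecs A p \<omega> \<beta>})"
  assume "upper_estimate A F f \<beta>"
  from this[unfolded upper_estimate_def, rule_format, of 1 p "\<lambda>_. \<tau>"]
  have "limsup ?c = 0"
    using p \<tau> mecs_pos by (simp add: \<mu>_def)
  moreover have "limsup ?c = 1"
    using cond_1 by (intro lim_imp_Limsup[OF trivial_limit_sequentially] tendsto_eventually) (auto elim: eventually_mono)
  ultimately show False by simp
qed

section \<open>The Markov chain of an MD strategy\<close>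

definition chain_prob :: "'q vass_mdp \<Rightarrow> ('q \<Rightarrow> 'q vtrans) \<Rightarrow> 'q \<Rightarrow> 'q vtrans \<Rightarrow> real" where
  "chain_prob A \<sigma> q t = (if q \<in> nstates A then (if t = \<sigma> q then 1 else 0)
                   else if t \<in> Out A q then prob A t else 0)"

lemma step_prob_md: "step_prob A (md_strategy \<sigma>) p0 ts t = chain_prob A \<sigma> (last_state p0 ts) t"
  by (simp add: step_prob_def md_strategy_def chain_prob_def Let_def pmf_return indicator_def)

lemma prefix_prob_Nil[simp]: "prefix_prob A \<sigma> p [] = 1"
  by (simp add: prefix_prob_def)

lemma prefix_prob_Cons:
  "prefix_prob A (md_strategy \<sigma>) p (t # w) = chain_prob A \<sigma> p t * prefix_prob A (md_strategy \<sigma>) (tgt t) w"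
proof -
  have "prefix_prob A (md_strategy \<sigma>) p (t # w) =
    (\<Prod>i<Suc (length w). chain_prob A \<sigma> (last_state p (take i (t # w))) ((t # w) ! i))"
    by (simp add: prefix_prob_def step_prob_md)
  also have "\<dots> = chain_prob A \<sigma> (last_state p []) t *
      (\<Prod>i<length w. chain_prob A \<sigma> (last_state p (take (Suc i) (t # w))) ((t # w) ! Suc i))"
    by (subst prod.lessThan_Suc_shift) simp
  also have "\<dots> = chain_prob A \<sigma> p t * prefix_prob A (md_strategy \<sigma>) (tgt t) w"
    by (simp add: prefix_prob_def step_prob_md last_state_Cons) (simp add: last_state_def)
  finally show ?thesis .
qed

definition choice_pmf :: "'q vass_mdp \<Rightarrow> ('q \<Rightarrow> 'q vtrans) \<Rightarrow> 'q \<Rightarrow> 'q vtrans pmf" where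
  "choice_pmf A \<sigma> q = (if q \<in> nstates A then return_pmf (\<sigma> q) else embed_pmf (chain_prob A \<sigma> q))"

definition choice_fun_pmf :: "'q vass_mdp \<Rightarrow> ('q \<Rightarrow> 'q vtrans) \<Rightarrow> ('q \<Rightarrow> 'q vtrans) pmf" where
  "choice_fun_pmf A \<sigma> = Pi_pmf (states A) undefined (choice_pmf A \<sigma>)"

text \<open>Junk values of a choice function may leave \<open>states A\<close>; projecting back keeps every
  \<open>run_state\<close> in the finite set \<open>states A\<close>, which makes \<open>run\<close> measurable.\<close>
definition into_states :: "'q vass_mdp \<Rightarrow> 'q \<Rightarrow> 'q" where
  "into_states A q = (if q \<in> states A then q else (SOME q. q \<in> states A))"

primrec run_state :: "'q vass_mdp \<Rightarrow> 'q \<Rightarrow> ('q \<Rightarrow> 'q vtrans) stream \<Rightarrow> nat \<Rightarrow> 'q" where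
  "run_state A p \<omega> 0 = p"
| "run_state A p \<omega> (Suc i) = into_states A (tgt ((\<omega> !! i) (run_state A p \<omega> i)))"

definition run :: "'q vass_mdp \<Rightarrow> 'q \<Rightarrow> ('q \<Rightarrow> 'q vtrans) stream \<Rightarrow> 'q vtrans stream" where
  "run A p \<omega> = smap (\<lambda>i. (\<omega> !! i) (run_state A p \<omega> i)) nats"

lemma run_snth[simp]: "run A p \<omega> !! i = (\<omega> !! i) (run_state A p \<omega> i)"
  by (simp add: run_def)

lemma run_state_Cons: "run_state A p (g ## \<omega>) (Suc i) = run_state A (into_states A (tgt (g p))) \<omega> i"
  by (induction i) simp_all

lemma run_Cons: "run A p (g ## \<omega>) = g p ## run A (into_states A (tgt (g p))) \<omega>"
proof (rule stream_eqI_snth)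
  fix n show "run A p (g ## \<omega>) !! n = (g p ## run A (into_states A (tgt (g p))) \<omega>) !! n"
  proof (cases n)
    case 0 then show ?thesis using run_snth[of A p "g ## \<omega>" 0] by simp
  next
    case (Suc m)
    have "run A p (g ## \<omega>) !! n = (\<omega> !! m) (run_state A p (g ## \<omega>) (Suc m))"
      by (simp only: run_snth Suc snth_Stream)
    also have "\<dots> = (\<omega> !! m) (run_state A (into_states A (tgt (g p))) \<omega> m)" by (simp only: run_state_Cons)
    finally show ?thesis by (simp only: Suc snth_Stream run_snth)
  qed
qed

lemma into_states_in: "states A \<noteq> {} \<Longrightarrow> into_states A q \<in> states A"
  by (auto simp: into_states_def intro: someI)

lemma measurable_run_state:
  assumes "finite (states A)" "states A \<noteq> {}" "p \<in> states A"
  shows "(\<lambda>\<omega>. run_state A p \<omega> i) \<in> stream_space (measure_pmf K) \<rightarrow>\<^sub>M count_space (states A)"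
proof (induction i)
  case 0
  then show ?case using assms by simp
next
  case (Suc i)
  have "(\<lambda>\<omega>. (\<lambda>q \<omega>. into_states A (tgt ((\<omega> !! i) q))) (run_state A p \<omega> i) \<omega>) \<in> stream_space (measure_pmf K) \<rightarrow>\<^sub>M count_space (states A)"
  proof (rule measurable_compose_countable'[OF _ Suc])
    fix q
    have "(\<lambda>\<omega>. \<omega> !! i) \<in> stream_space (measure_pmf K) \<rightarrow>\<^sub>M measure_pmf K" by simp
    moreover have "(\<lambda>g. into_states A (tgt (g q))) \<in> measure_pmf K \<rightarrow>\<^sub>M count_space (states A)"
      using assms by (auto intro: into_states_in)
    ultimately show "(\<lambda>\<omega>. into_states A (tgt ((\<omega> !! i) q))) \<in> stream_space (measure_pmf K) \<rightarrow>\<^sub>M count_space (states A)"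
      by (rule measurable_compose[where f="\<lambda>\<omega>. \<omega> !! i"])
  qed (use assms in \<open>auto intro: countable_finite\<close>)
  then show ?case by simp
qed

lemma measurable_run:
  assumes "finite (states A)" "states A \<noteq> {}" "p \<in> states A"
  shows "run A p \<in> stream_space (measure_pmf K) \<rightarrow>\<^sub>M stream_space (count_space UNIV)"
proof (rule measurable_stream_space2)
  fix n
  have "(\<lambda>\<omega>. (\<lambda>q \<omega>. (\<omega> !! n) q) (run_state A p \<omega> n) \<omega>) \<in> stream_space (measure_pmf K) \<rightarrow>\<^sub>M count_space UNIV"
  proof (rule measurable_compose_countable'[OF _ measurable_run_state[OF assms]])
    fix q
    have "(\<lambda>\<omega>. \<omega> !! n) \<in> stream_space (measure_pmf K) \<rightarrow>\<^sub>M measure_pmf K" by simp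
    moreover have "(\<lambda>g. g q) \<in> measure_pmf K \<rightarrow>\<^sub>M count_space UNIV" by simp
    ultimately show "(\<lambda>\<omega>. (\<omega> !! n) q) \<in> stream_space (measure_pmf K) \<rightarrow>\<^sub>M count_space UNIV"
      by (rule measurable_compose[where f="\<lambda>\<omega>. \<omega> !! n"])
  qed (use assms in \<open>auto intro: countable_finite\<close>)
  then show "(\<lambda>\<omega>. run A p \<omega> !! n) \<in> stream_space (measure_pmf K) \<rightarrow>\<^sub>M count_space UNIV"
    by simp
qed

locale md_chain =
  fixes A :: "'q vass_mdp" and \<sigma> :: "'q \<Rightarrow> 'q vtrans"
  assumes valid: "vass_mdp A" and MD: "is_MD A \<sigma>"
begin

lemma tgt_in_states: "t \<in> trans A \<Longrightarrow> tgt t \<in> states A"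
  using valid by (auto simp: vass_mdp_def)

lemma src_in_states: "t \<in> trans A \<Longrightarrow> src t \<in> states A"
  using valid by (auto simp: vass_mdp_def)

lemma prob_pos: "q \<notin> nstates A \<Longrightarrow> t \<in> Out A q \<Longrightarrow> prob A t > 0"
proof -
  assume a: "q \<notin> nstates A" "t \<in> Out A q"
  then have "q \<in> states A" using src_in_states[of t] by (auto simp: Out_def)
  with a valid show ?thesis unfolding vass_mdp_def by blast
qed

lemma chain_prob_nonneg: "chain_prob A \<sigma> q t \<ge> 0"
  using prob_pos by (auto simp: chain_prob_def less_imp_le)

lemma chain_prob_nonzero_Out: "chain_prob A \<sigma> q t \<noteq> 0 \<Longrightarrow> t \<in> Out A q"
  using MD by (auto simp: chain_prob_def is_MD_def split: if_splits)

lemma prefix_prob_nonneg: "prefix_prob A (md_strategy \<sigma>) p w \<ge> 0"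
  by (induction w arbitrary: p) (simp_all add: prefix_prob_Cons chain_prob_nonneg)

lemma finite_states: "finite (states A)" and states_ne: "states A \<noteq> {}"
  using valid by (auto simp: vass_mdp_def)

lemma finite_trans: "finite (trans A)"
  using valid by (auto simp: vass_mdp_def)

lemma finite_Out: "finite (Out A q)"
  using valid by (auto simp: vass_mdp_def Out_def)

lemma pmf_choice_pmf: "q \<in> states A \<Longrightarrow> pmf (choice_pmf A \<sigma> q) t = chain_prob A \<sigma> q t"
proof (cases "q \<in> nstates A")
  case True then show ?thesis by (simp add: choice_pmf_def chain_prob_def indicator_def)
next
  case False
  assume q: "q \<in> states A"
  have "(\<integral>\<^sup>+x. ennreal (chain_prob A \<sigma> q x) \<partial>count_space UNIV) = (\<Sum>x\<in>Out A q. ennreal (chain_prob A \<sigma> q x))"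
    by (rule nn_integral_count_space'[OF finite_Out]) (auto simp: chain_prob_def False)
  also have "\<dots> = ennreal (\<Sum>x\<in>Out A q. chain_prob A \<sigma> q x)"
    using chain_prob_nonneg by simp
  also have "(\<Sum>x\<in>Out A q. chain_prob A \<sigma> q x) = (\<Sum>x\<in>Out A q. prob A x)"
    by (rule sum.cong) (auto simp: chain_prob_def False)
  also have "\<dots> = 1" using valid q False by (auto simp: vass_mdp_def)
  finally have "(\<integral>\<^sup>+x. ennreal (chain_prob A \<sigma> q x) \<partial>count_space UNIV) = 1" by simp
  then show ?thesis using False
    by (simp add: choice_pmf_def pmf_embed_pmf chain_prob_nonneg)
qed

lemma emeasure_choice_fun_pmf_eq:
  assumes "q \<in> states A"
  shows "emeasure (measure_pmf (choice_fun_pmf A \<sigma>)) {g. g q = t} = ennreal (chain_prob A \<sigma> q t)"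
proof -
  have "emeasure (measure_pmf (choice_fun_pmf A \<sigma>)) {g. g q = t} = emeasure (measure_pmf (map_pmf (\<lambda>f. f q) (choice_fun_pmf A \<sigma>))) {t}"
    by (simp add: vimage_def)
  also have "map_pmf (\<lambda>f. f q) (choice_fun_pmf A \<sigma>) = choice_pmf A \<sigma> q"
    unfolding choice_fun_pmf_def by (subst Pi_pmf_component[OF finite_states]) (simp add: assms)
  finally show ?thesis using pmf_choice_pmf[OF assms] by (simp add: emeasure_pmf_single)
qed

abbreviation choice_streams :: "('q \<Rightarrow> 'q vtrans) stream measure" where
  "choice_streams \<equiv> stream_space (measure_pmf (choice_fun_pmf A \<sigma>))"

lemma space_choice_streams: "space choice_streams = UNIV"
  by (simp add: space_stream_space)

lemma prob_space_choice_streams: "prob_space choice_streams"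
  by (rule prob_space.prob_space_stream_space[OF prob_space_measure_pmf])

lemma emeasure_run_sstart:
  assumes "p \<in> states A"
  shows "emeasure choice_streams (run A p -` sstart UNIV w \<inter> space choice_streams) = ennreal (prefix_prob A (md_strategy \<sigma>) p w)"
  using assms
proof (induction w arbitrary: p)
  case Nil
  then show ?case using prob_space.emeasure_space_1[OF prob_space_choice_streams] by (simp add: space_choice_streams)
next
  case (Cons t w)
  let ?q = "into_states A (tgt t)"
  let ?C = "run A ?q -` sstart UNIV w \<inter> space choice_streams"
  have X: "run A p -` sstart UNIV (t # w) \<inter> space choice_streams \<in> sets choice_streams"
    using measurable_run[OF finite_states states_ne Cons.prems] by measurable
  have "emeasure choice_streams (run A p -` sstart UNIV (t # w) \<inter> space choice_streams)
     = (\<integral>\<^sup>+g. emeasure choice_streams {x\<in>space choice_streams. g ## x \<in> run A p -` sstart UNIV (t # w) \<inter> space choice_streams} \<partial>measure_pmf (choice_fun_pmf A \<sigma>))"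
    by (rule prob_space.emeasure_stream_space[OF prob_space_measure_pmf X])
  also have "\<dots> = (\<integral>\<^sup>+g. emeasure choice_streams ?C * indicator {g. g p = t} g \<partial>measure_pmf (choice_fun_pmf A \<sigma>))"
  proof (rule nn_integral_cong)
    fix g
    show "emeasure choice_streams {x\<in>space choice_streams. g ## x \<in> run A p -` sstart UNIV (t # w) \<inter> space choice_streams} =
          emeasure choice_streams ?C * indicator {g. g p = t} g"
      by (cases "g p = t") (auto simp: run_Cons space_choice_streams vimage_def)
  qed
  also have "\<dots> = emeasure choice_streams ?C * ennreal (chain_prob A \<sigma> p t)"
    by (subst nn_integral_cmult_indicator) (auto simp: emeasure_choice_fun_pmf_eq Cons.prems)
  also have "\<dots> = ennreal (prefix_prob A (md_strategy \<sigma>) p (t # w))"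
  proof (cases "chain_prob A \<sigma> p t = 0")
    case True then show ?thesis by (simp add: prefix_prob_Cons)
  next
    case False
    then have "t \<in> Out A p" by (rule chain_prob_nonzero_Out)
    then have "tgt t \<in> states A" using tgt_in_states by (auto simp: Out_def)
    then have "?q = tgt t" by (simp add: into_states_def)
    then have "emeasure choice_streams ?C = ennreal (prefix_prob A (md_strategy \<sigma>) (tgt t) w)"
      using Cons.IH[OF \<open>tgt t \<in> states A\<close>] by simp
    then show ?thesis
      by (simp add: prefix_prob_Cons ennreal_mult'' chain_prob_nonneg prefix_prob_nonneg mult.commute)
  qed
  finally show ?case .
qed

lemma sum_chain_prob: "p \<in> states A \<Longrightarrow> (\<Sum>t\<in>trans A. chain_prob A \<sigma> p t) = 1"
proof (cases "p \<in> nstates A")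
  case True
  assume p: "p \<in> states A"
  have "\<sigma> p \<in> trans A" using MD True by (auto simp: is_MD_def Out_def)
  then show ?thesis using True finite_trans by (simp add: chain_prob_def sum.delta')
next
  case False
  assume p: "p \<in> states A"
  have "(\<Sum>t\<in>trans A. chain_prob A \<sigma> p t) = (\<Sum>t\<in>trans A. if src t = p then prob A t else 0)"
    by (rule sum.cong) (auto simp: chain_prob_def False Out_def)
  also have "\<dots> = (\<Sum>t\<in>Out A p. prob A t)"
    unfolding Out_def using finite_trans by (simp add: sum.inter_filter)
  also have "\<dots> = 1" using valid p False by (auto simp: vass_mdp_def)
  finally show ?thesis .
qed

lemma sum_prefix_prob:
  "p \<in> states A \<Longrightarrow> (\<Sum>w\<in>{w. set w \<subseteq> trans A \<and> length w = n}. prefix_prob A (md_strategy \<sigma>) p w) = 1"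
proof (induction n arbitrary: p)
  case 0
  have "{w. set w \<subseteq> trans A \<and> length w = 0} = {[]}" by auto
  then show ?case by simp
next
  case (Suc n)
  let ?W = "{w. set w \<subseteq> trans A \<and> length w = n}"
  have "(\<Sum>w\<in>{w. set w \<subseteq> trans A \<and> length w = Suc n}. prefix_prob A (md_strategy \<sigma>) p w)
     = (\<Sum>x\<in>?W \<times> trans A. prefix_prob A (md_strategy \<sigma>) p (snd x # fst x))"
  proof -
    have inj: "inj_on (\<lambda>(xs, n). n # xs) (?W \<times> trans A)" by (auto simp: inj_on_def)
    show ?thesis unfolding lists_length_Suc_eq sum.reindex[OF inj]
      by (simp add: o_def case_prod_beta)
  qed
  also have "\<dots> = (\<Sum>w\<in>?W. \<Sum>t\<in>trans A. chain_prob A \<sigma> p t * prefix_prob A (md_strategy \<sigma>) (tgt t) w)"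
    by (simp add: sum.cartesian_product prefix_prob_Cons case_prod_beta)
  also have "\<dots> = (\<Sum>t\<in>trans A. chain_prob A \<sigma> p t * (\<Sum>w\<in>?W. prefix_prob A (md_strategy \<sigma>) (tgt t) w))"
    by (subst sum.swap) (simp add: sum_distrib_left)
  also have "\<dots> = (\<Sum>t\<in>trans A. chain_prob A \<sigma> p t)"
    by (rule sum.cong) (auto simp: Suc.IH tgt_in_states)
  also have "\<dots> = 1" by (rule sum_chain_prob[OF Suc.prems])
  finally show ?case .
qed

text \<open>\<open>stream_space_eq_sstart\<close> compares measures on cylinders over a countable alphabet,
  so any measure with the cylinder probabilities of the chain must first be shown to live on
  \<open>streams (trans A)\<close>.\<close>
lemma AE_streams_trans:
  assumes N: "prob_space N" and sN: "sets N = sets (stream_space (count_space UNIV))"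
    and cylN: "\<And>w. emeasure N (sstart UNIV w) = ennreal (prefix_prob A (md_strategy \<sigma>) p w)"
    and p: "p \<in> states A"
  shows "AE x in N. x \<in> streams (trans A)"
proof -
  interpret N: prob_space N by fact
  have "AE x in N. x \<in> (\<Union>w\<in>{w. set w \<subseteq> trans A \<and> length w = Suc i}. sstart UNIV w)" for i
  proof (rule N.AE_prob_1)
    let ?W = "{w. set w \<subseteq> trans A \<and> length w = Suc i}"
    have disj: "disjoint_family_on (sstart UNIV) ?W"
      unfolding disjoint_family_on_def
    proof (intro ballI impI)
      fix v w assume "v \<in> ?W" "w \<in> ?W" "v \<noteq> w"
      then obtain k where "k < Suc i" "v ! k \<noteq> w ! k" by (auto simp: list_eq_iff_nth_eq)
      then show "sstart UNIV v \<inter> sstart UNIV w = {}"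
        using \<open>v \<in> ?W\<close> \<open>w \<in> ?W\<close> by (auto simp: sstart_eq)
    qed
    have "emeasure N (\<Union>w\<in>?W. sstart UNIV w) = (\<Sum>w\<in>?W. emeasure N (sstart UNIV w))"
      using disj finite_lists_length_eq[OF finite_trans] sN
      by (intro sum_emeasure[symmetric]) auto
    also have "\<dots> = (\<Sum>w\<in>?W. ennreal (prefix_prob A (md_strategy \<sigma>) p w))"
      by (simp add: cylN)
    also have "\<dots> = ennreal 1"
      using sum_prefix_prob[OF p] prefix_prob_nonneg by (subst sum_ennreal) auto
    finally show "N.prob (\<Union>w\<in>?W. sstart UNIV w) = 1"
      by (simp add: N.emeasure_eq_measure)
  qed
  then have "AE x in N. \<forall>i. x \<in> (\<Union>w\<in>{w. set w \<subseteq> trans A \<and> length w = Suc i}. sstart UNIV w)"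
    by (simp add: AE_all_countable)
  then show ?thesis
  proof (rule AE_mp, intro AE_I2 impI)
    fix x assume H: "\<forall>i. x \<in> (\<Union>w\<in>{w. set w \<subseteq> trans A \<and> length w = Suc i}. sstart UNIV w)"
    show "x \<in> streams (trans A)" unfolding streams_iff_snth
    proof
      fix i
      from H obtain w where "set w \<subseteq> trans A" "length w = Suc i" "x \<in> sstart UNIV w" by blast
      then show "x !! i \<in> trans A" by (auto simp: sstart_eq)
    qed
  qed
qed

definition chain_measure :: "'q \<Rightarrow> 'q vtrans stream measure" where
  "chain_measure p = distr choice_streams (stream_space (count_space UNIV)) (run A p)"

lemma
  assumes p: "p \<in> states A"
  shows prob_space_chain_measure: "prob_space (chain_measure p)"
    and sets_chain_measure: "sets (chain_measure p) = sets (stream_space (count_space UNIV))"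
    and emeasure_chain_measure_sstart: "\<And>w. emeasure (chain_measure p) (sstart UNIV w) = ennreal (prefix_prob A (md_strategy \<sigma>) p w)"
proof -
  have m: "run A p \<in> choice_streams \<rightarrow>\<^sub>M stream_space (count_space UNIV)"
    by (rule measurable_run[OF finite_states states_ne p])
  show "prob_space (chain_measure p)" unfolding chain_measure_def
    by (rule prob_space.prob_space_distr[OF prob_space_choice_streams m])
  show "sets (chain_measure p) = sets (stream_space (count_space UNIV))" by (simp add: chain_measure_def)
  fix w show "emeasure (chain_measure p) (sstart UNIV w) = ennreal (prefix_prob A (md_strategy \<sigma>) p w)"
    unfolding chain_measure_def by (subst emeasure_distr[OF m sets_sstart]) (rule emeasure_run_sstart[OF p])
qed

lemma path_measure_md_strategy:
  assumes p: "p \<in> states A"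
  shows "path_measure A (md_strategy \<sigma>) p = chain_measure p"
  unfolding path_measure_def
proof (rule the_equality)
  show "prob_space (chain_measure p) \<and> sets (chain_measure p) = sets (stream_space (count_space UNIV)) \<and>
    (\<forall>w. emeasure (chain_measure p) (sstart UNIV w) = ennreal (prefix_prob A (md_strategy \<sigma>) p w))"
    using prob_space_chain_measure[OF p] sets_chain_measure[OF p] emeasure_chain_measure_sstart[OF p] by blast
next
  fix \<mu> assume H: "prob_space \<mu> \<and> sets \<mu> = sets (stream_space (count_space UNIV)) \<and>
    (\<forall>w. emeasure \<mu> (sstart UNIV w) = ennreal (prefix_prob A (md_strategy \<sigma>) p w))"
  have ae1: "AE x in \<mu>. x \<in> streams (trans A)"
    using H p by (intro AE_streams_trans) auto
  have ae2: "AE x in chain_measure p. x \<in> streams (trans A)"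
    using prob_space_chain_measure[OF p] sets_chain_measure[OF p] emeasure_chain_measure_sstart[OF p] p by (intro AE_streams_trans) auto
  have sT: "streams (trans A) \<in> sets (stream_space (count_space UNIV))"
    by (rule streams_sets) simp
  show "\<mu> = chain_measure p"
  proof (rule stream_space_eq_sstart[where S="trans A"])
    show "countable (trans A)" using finite_trans by (rule countable_finite)
    fix xs :: "'q vtrans list" assume "xs \<in> lists (trans A)"
    then have eq: "sstart (trans A) xs = sstart UNIV xs \<inter> streams (trans A)" by (rule sstart_restrict)
    have "emeasure \<mu> (sstart (trans A) xs) = emeasure \<mu> (sstart UNIV xs)"
      unfolding eq
    proof (rule emeasure_eq_AE)
      show "AE x in \<mu>. (x \<in> sstart UNIV xs \<inter> streams (trans A)) = (x \<in> sstart UNIV xs)"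
        using ae1 by (rule AE_mp) simp
    qed (use H sT in simp_all)
    also have "\<dots> = emeasure (chain_measure p) (sstart UNIV xs)" using H emeasure_chain_measure_sstart[OF p] by simp
    also have "\<dots> = emeasure (chain_measure p) (sstart (trans A) xs)"
      unfolding eq
    proof (rule emeasure_eq_AE)
      show "AE x in chain_measure p. (x \<in> sstart UNIV xs) = (x \<in> sstart UNIV xs \<inter> streams (trans A))"
        using ae2 by (rule AE_mp) simp
    qed (use sets_chain_measure[OF p] sT in simp_all)
    finally show "emeasure \<mu> (sstart (trans A) xs) = emeasure (chain_measure p) (sstart (trans A) xs)" .
  qed (use H ae1 ae2 prob_space_chain_measure[OF p] sets_chain_measure[OF p] emeasure_chain_measure_sstart[OF p] in simp_all)
qed

lemma is_strategy_md_strategy: "is_strategy A (md_strategy \<sigma>)"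
  using MD by (auto simp: is_strategy_def md_strategy_def is_MD_def)

lemma pred_chain_measure:
  assumes p: "p \<in> states A" and P: "Measurable.pred (stream_space (count_space UNIV)) P"
  shows "{\<omega> \<in> space (chain_measure p). P \<omega>} \<in> sets (chain_measure p)"
proof -
  have "Measurable.pred (chain_measure p) P"
    unfolding measurable_cong_sets[OF sets_chain_measure[OF p] refl] by (rule P)
  then show ?thesis by (rule predE)
qed

lemma AE_chain_measure:
  assumes p: "p \<in> states A" and P: "Measurable.pred (stream_space (count_space UNIV)) P"
    and ae: "AE \<omega> in choice_streams. P (run A p \<omega>)"
  shows "AE \<omega> in chain_measure p. P \<omega>"
  unfolding chain_measure_def
  using ae by (subst AE_distr_iff[OF measurable_run[OF finite_states states_ne p]]) (simp_all add: predE[OF P])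

lemma finite_mec_range: "finite (range (mec_of A))"
proof -
  have "range (mec_of A) \<subseteq> insert None (Some ` (Pow (states A) \<times> Pow (trans A)))"
  proof
    fix x assume "x \<in> range (mec_of A)"
    then obtain q where q: "x = mec_of A q" by blast
    show "x \<in> insert None (Some ` (Pow (states A) \<times> Pow (trans A)))"
    proof (cases "\<exists>M. is_MEC A M \<and> q \<in> fst M")
      case True
      then have "is_MEC A (SOME M. is_MEC A M \<and> q \<in> fst M)" using someI_ex[OF True] by blast
      then have "(SOME M. is_MEC A M \<and> q \<in> fst M) \<in> Pow (states A) \<times> Pow (trans A)"
        by (auto simp: is_MEC_def is_EC_def mem_Times_iff)
      then show ?thesis using True q by (simp add: mec_of_def)
    next
      case False
      have "mec_of A q = None" unfolding mec_of_def using False by (rule if_not_P)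
      then show ?thesis using q by simp
    qed
  qed
  moreover have "finite (insert None (Some ` (Pow (states A) \<times> Pow (trans A))))"
    using finite_states finite_trans by simp
  ultimately show ?thesis by (rule finite_subset)
qed

lemma pred_has_mecs: "Measurable.pred (stream_space (count_space UNIV)) (\<lambda>\<omega>. has_mecs A p \<omega> \<beta>)"
  unfolding has_mecs_def
proof (intro pred_intros_countable(2) pred_intros_countable(1) pred_intros_imp')
  fix N n :: nat
  let ?R = "range (mec_of A)"
  have cR: "countable ?R" using finite_mec_range by (rule countable_finite)
  show "Measurable.pred (stream_space (count_space UNIV)) (\<lambda>\<omega>. mecs_prefix A p \<omega> n = \<beta>)"
  proof (rule pred_determined_by_stake[where e="\<lambda>x. to_nat_on ?R (mec_of A (tgt x))" and n=n])
    fix \<omega> \<omega>' :: "'q vtrans stream"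
    assume H: "stake n (smap (\<lambda>x. to_nat_on ?R (mec_of A (tgt x))) \<omega>) = stake n (smap (\<lambda>x. to_nat_on ?R (mec_of A (tgt x))) \<omega>')"
    have e: "mec_of A (tgt (\<omega> !! i)) = mec_of A (tgt (\<omega>' !! i))" if "i < n" for i
    proof -
      have "to_nat_on ?R (mec_of A (tgt (\<omega> !! i))) = to_nat_on ?R (mec_of A (tgt (\<omega>' !! i)))"
        using stake_smap_eqD[OF H that] .
      then show ?thesis using inj_on_to_nat_on[OF cR] by (simp add: inj_on_def)
    qed
    have "List.map_filter (mec_of A) (map (state_at p \<omega>) [0..<n]) = List.map_filter (mec_of A) (map (state_at p \<omega>') [0..<n])"
    proof (rule map_filter_map_cong)
      fix x assume "x \<in> set [0..<n]"
      then have x: "x < n" by simp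
      show "mec_of A (state_at p \<omega> x) = mec_of A (state_at p \<omega>' x)"
      proof (cases x)
        case 0 then show ?thesis by (simp add: state_at_def)
      next
        case (Suc k) then show ?thesis using e[of k] x by (simp add: state_at_def)
      qed
    qed
    then show "(mecs_prefix A p \<omega> n = \<beta>) = (mecs_prefix A p \<omega>' n = \<beta>)"
      by (simp add: mecs_prefix_def)
  qed
qed

fun chain_path :: "'q \<Rightarrow> 'q vtrans list \<Rightarrow> bool" where
  "chain_path q [] = True"
| "chain_path q (t # w) = (t \<in> chain_trans A \<sigma> \<and> src t = q \<and> chain_path (tgt t) w)"

lemma chain_path_append: "chain_path q (u @ v) \<longleftrightarrow> chain_path q u \<and> chain_path (last_state q u) v"
  by (induction u arbitrary: q) (simp_all add: last_state_Cons, simp add: last_state_def)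

lemma chain_prob_pos: "t \<in> chain_trans A \<sigma> \<Longrightarrow> chain_prob A \<sigma> (src t) t > 0"
  using prob_pos[of "src t" t] by (auto simp: chain_trans_def chain_prob_def Out_def)

lemma chain_prob_nonzero_D: "chain_prob A \<sigma> q t \<noteq> 0 \<Longrightarrow> t \<in> chain_trans A \<sigma> \<and> src t = q"
  using chain_prob_nonzero_Out[of q t] by (auto simp: chain_trans_def chain_prob_def Out_def split: if_splits)

lemma prefix_prob_pos_if_chain_path: "chain_path q w \<Longrightarrow> prefix_prob A (md_strategy \<sigma>) q w > 0"
  by (induction w arbitrary: q) (auto simp: prefix_prob_Cons intro!: mult_pos_pos chain_prob_pos)

lemma chain_path_if_reachable:
  assumes "(q, q') \<in> (edges (chain_trans A \<sigma>))\<^sup>*"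
  shows "\<exists>u. chain_path q u \<and> last_state q u = q'"
  using assms
proof (induction rule: converse_rtrancl_induct)
  case base
  then show ?case by (intro exI[of _ "[]"]) (simp add: last_state_def)
next
  case (step y z)
  then obtain u where u: "chain_path z u" "last_state z u = q'" by blast
  from step(1) obtain t where t: "t \<in> chain_trans A \<sigma>" "src t = y" "tgt t = z"
    by (auto simp: edges_def)
  show ?case using t u by (intro exI[of _ "t # u"]) (simp add: last_state_Cons)
qed

lemma chain_prob_set_choice_fun_pmf: "g \<in> set_pmf (choice_fun_pmf A \<sigma>) \<Longrightarrow> q \<in> states A \<Longrightarrow> chain_prob A \<sigma> q (g q) \<noteq> 0"
  using pmf_choice_pmf[of q "g q"] by (auto simp: choice_fun_pmf_def set_Pi_pmf[OF finite_states] PiE_dflt_def set_pmf_iff)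

lemma AE_choices_in_support: "AE \<omega> in choice_streams. \<forall>i. \<omega> !! i \<in> set_pmf (choice_fun_pmf A \<sigma>)"
proof -
  have "AE \<omega> in choice_streams. stream_all (\<lambda>x. x \<in> set_pmf (choice_fun_pmf A \<sigma>)) \<omega>"
    by (rule prob_space.AE_stream_all[OF prob_space_measure_pmf]) (simp_all add: AE_measure_pmf)
  then show ?thesis by (simp only: stream_all_def)
qed

end

section \<open>Bounded-zero BSCCs\<close>

locale zero_bscc = md_chain A \<sigma> for A :: "'q vass_mdp" and \<sigma> +
  fixes B :: "'q set" and M :: "'q mec" and pB :: 'q
  assumes BSCC: "is_BSCC A \<sigma> B" and MEC: "is_MEC A M" and B_subset_M: "B \<subseteq> fst M" and pB: "pB \<in> B"
    and returns_zero: "measure (path_measure A (md_strategy \<sigma>) pB)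
      {\<omega> \<in> space (path_measure A (md_strategy \<sigma>) pB). returns pB \<omega> \<and> U_ret pB \<omega> = 0} = 1"
begin

lemma B_states: "B \<subseteq> states A"
  using BSCC by (simp add: is_BSCC_def)

lemma pB_states: "pB \<in> states A"
  using pB B_states by blast

lemma chain_closed: "t \<in> chain_trans A \<sigma> \<Longrightarrow> src t \<in> B \<Longrightarrow> tgt t \<in> B"
  using BSCC by (simp add: is_BSCC_def)

lemma chain_path_last_in_B: "chain_path q w \<Longrightarrow> q \<in> B \<Longrightarrow> last_state q w \<in> B"
  by (induction w arbitrary: q) (auto simp: last_state_Cons chain_closed, simp add: last_state_def)

lemma finite_B: "finite B"
  using B_states finite_states by (rule finite_subset)

lemma returns_zero_chain_measure:
  "measure (chain_measure pB) {\<omega> \<in> space (chain_measure pB). returns pB \<omega> \<and> U_ret pB \<omega> = 0} = 1"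
  using returns_zero by (simp add: path_measure_md_strategy[OF pB_states])

text \<open>The cylinder of \<open>c\<close> has positive probability but lies outside the almost sure event
  \<open>U_ret pB = 0\<close>.\<close>
lemma first_return_sum_zero:
  assumes c: "chain_path pB c" "c \<noteq> []" "last_state pB c = pB"
    and first: "\<forall>k. 0 < k \<and> k < length c \<longrightarrow> last_state pB (take k c) \<noteq> pB"
  shows "sum_list (map upd c) = 0"
proof (rule ccontr)
  assume nz: "sum_list (map upd c) \<noteq> 0"
  let ?\<mu> = "chain_measure pB"
  interpret P: prob_space ?\<mu> by (rule prob_space_chain_measure[OF pB_states])
  let ?E = "{\<omega> \<in> space ?\<mu>. returns pB \<omega> \<and> U_ret pB \<omega> = 0}"
  let ?C = "sstart UNIV c"
  have E: "?E \<in> sets ?\<mu>"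
    using returns_zero_chain_measure measure_notin_sets[of ?E ?\<mu>] by (cases "?E \<in> sets ?\<mu>") auto
  have C: "?C \<in> sets ?\<mu>" using sets_chain_measure[OF pB_states] by simp
  have "?E \<inter> ?C = {}"
    using U_ret_sstart_first_return[OF _ c(2,3) first] nz by auto
  then have "P.prob (?E \<union> ?C) = P.prob ?E + P.prob ?C"
    using E C by (intro P.finite_measure_Union)
  moreover have "P.prob ?C = prefix_prob A (md_strategy \<sigma>) pB c"
    using emeasure_chain_measure_sstart[OF pB_states, of c] prefix_prob_nonneg
    by (simp add: P.emeasure_eq_measure)
  moreover have "prefix_prob A (md_strategy \<sigma>) pB c > 0" by (rule prefix_prob_pos_if_chain_path[OF c(1)])
  ultimately have "P.prob (?E \<union> ?C) > 1" using returns_zero_chain_measure by simp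
  with P.prob_le_1 show False by (simp add: not_less[symmetric])
qed

lemma cycle_sum_zero:
  "chain_path pB c \<Longrightarrow> last_state pB c = pB \<Longrightarrow> sum_list (map upd c) = 0"
proof (induction "length c" arbitrary: c rule: less_induct)
  case less
  show ?case
  proof (cases "c = []")
    case True then show ?thesis by simp
  next
    case False
    show ?thesis
    proof (cases "\<exists>k. 0 < k \<and> k < length c \<and> last_state pB (take k c) = pB")
      case True
      then obtain k where k: "0 < k" "k < length c" "last_state pB (take k c) = pB" by blast
      have split: "c = take k c @ drop k c" by simp
      have p1: "chain_path pB (take k c)" and p2: "chain_path pB (drop k c)"
        using less.prems(1) chain_path_append[of pB "take k c" "drop k c"] k(3) split by auto
      have l2: "last_state pB (drop k c) = pB"
        using less.prems(2) last_state_append[of pB "take k c" "drop k c"] k(3) split by simp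
      have "sum_list (map upd (take k c)) = 0"
        using k by (intro less.hyps p1 k(3)) auto
      moreover have "sum_list (map upd (drop k c)) = 0"
        using k by (intro less.hyps p2 l2) auto
      moreover have "sum_list (map upd c) = sum_list (map upd (take k c)) + sum_list (map upd (drop k c))"
        by (metis append_take_drop_id map_append sum_list_append)
      ultimately show ?thesis by simp
    next
      case nf: False
      show ?thesis
        by (rule first_return_sum_zero[OF less.prems(1) False less.prems(2)]) (use nf in blast)
    qed
  qed
qed

lemma chain_path_sum_lower_bound:
  "\<exists>K::nat. \<forall>w. chain_path pB w \<longrightarrow> - int K \<le> sum_list (map upd w)"
proof -
  have ex: "\<exists>u. chain_path q u \<and> last_state q u = pB" if "q \<in> B" for q
    using BSCC that pB by (intro chain_path_if_reachable) (simp add: is_BSCC_def)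
  define U where "U q = (SOME u. chain_path q u \<and> last_state q u = pB)" for q
  have U: "chain_path q (U q) \<and> last_state q (U q) = pB" if "q \<in> B" for q
    unfolding U_def using someI_ex[OF ex[OF that]] .
  define K where "K = Max ((\<lambda>q. nat \<bar>sum_list (map upd (U q))\<bar>) ` B)"
  show ?thesis
  proof (intro exI allI impI)
    fix w assume w: "chain_path pB w"
    let ?q = "last_state pB w"
    have q: "?q \<in> B" by (rule chain_path_last_in_B[OF w pB])
    have "chain_path pB (w @ U ?q)" using w U[OF q] by (simp add: chain_path_append)
    moreover have "last_state pB (w @ U ?q) = pB" using U[OF q] by (simp add: last_state_append)
    ultimately have "sum_list (map upd (w @ U ?q)) = 0" by (rule cycle_sum_zero)
    then have "sum_list (map upd w) = - sum_list (map upd (U ?q))" by simp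
    moreover have "nat \<bar>sum_list (map upd (U ?q))\<bar> \<le> K"
      unfolding K_def using q finite_B by (intro Max_ge) auto
    ultimately show "- int K \<le> sum_list (map upd w)" by linarith
  qed
qed

lemma run_chain_path:
  assumes gd: "\<forall>i. \<omega> !! i \<in> set_pmf (choice_fun_pmf A \<sigma>)"
  shows "chain_path pB (stake j (run A pB \<omega>)) \<and> last_state pB (stake j (run A pB \<omega>)) = run_state A pB \<omega> j \<and> run_state A pB \<omega> j \<in> B"
proof (induction j)
  case 0
  then show ?case using pB by (simp add: last_state_def)
next
  case (Suc j)
  let ?q = "run_state A pB \<omega> j"
  let ?t = "(\<omega> !! j) ?q"
  have q: "?q \<in> B" using Suc by simp
  then have "chain_prob A \<sigma> ?q ?t \<noteq> 0" using chain_prob_set_choice_fun_pmf[OF gd[rule_format, of j]] B_states by auto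
  then have t: "?t \<in> chain_trans A \<sigma>" "src ?t = ?q" by (auto dest: chain_prob_nonzero_D)
  then have tB: "tgt ?t \<in> B" using q chain_closed by simp
  then have run_state: "run_state A pB \<omega> (Suc j) = tgt ?t" using B_states by (auto simp: into_states_def)
  have "stake (Suc j) (run A pB \<omega>) = stake j (run A pB \<omega>) @ [?t]"
    by (simp add: stake_Suc del: stake.simps(2))
  then show ?case using Suc t tB run_state by (simp add: chain_path_append last_state_snoc)
qed

lemma has_mecs_if_chain_path:
  assumes "\<forall>j. chain_path pB (stake j \<omega>)"
  shows "has_mecs A pB \<omega> [M]"
  unfolding has_mecs_def
proof (intro exI[of _ 1] allI impI)
  fix n :: nat assume n: "n \<ge> 1"
  have "\<forall>i\<in>set [0..<n]. mec_of A (state_at pB \<omega> i) = Some M"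
  proof
    fix i
    have "state_at pB \<omega> i \<in> B"
      unfolding state_at_stake using assms pB by (intro chain_path_last_in_B) auto
    then show "mec_of A (state_at pB \<omega> i) = Some M" using B_subset_M MEC by (intro mec_of_eq_Some) auto
  qed
  then have "List.map_filter (mec_of A) (map (state_at pB \<omega>) [0..<n]) = replicate n M"
    by (subst map_filter_const[where y=M]) auto
  then show "mecs_prefix A pB \<omega> n = [M]"
    using n by (simp add: mecs_prefix_def remdups_adj_replicate)
qed

text \<open>\<open>d q\<close> is the distance from \<open>q\<close> to \<open>src t\<close> in the chain and \<open>r q\<close> a transition one step closer.\<close>
lemma routing_to_transition:
  assumes t: "t \<in> bscc_trans A \<sigma> B"
  shows "\<exists>r d. (\<forall>q\<in>B. r q \<in> chain_trans A \<sigma> \<and> src (r q) = q) \<and> r (src t) = t \<and>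
      (\<forall>q\<in>B. q \<noteq> src t \<longrightarrow> d (tgt (r q)) < (d q :: nat))"
proof -
  let ?R = "edges (chain_trans A \<sigma>)"
  have tc: "t \<in> chain_trans A \<sigma>" "src t \<in> B" using t by (auto simp: bscc_trans_def)
  define d where "d q = (LEAST n. (q, src t) \<in> ?R ^^ n)" for q
  have reach: "\<exists>n. (q, src t) \<in> ?R ^^ n" if "q \<in> B" for q
    using BSCC that tc(2) by (simp add: is_BSCC_def rtrancl_power)
  have step: "\<exists>t'. t' \<in> chain_trans A \<sigma> \<and> src t' = q \<and> d (tgt t') < d q"
    if q: "q \<in> B" "q \<noteq> src t" for q
  proof -
    have dq: "(q, src t) \<in> ?R ^^ d q" unfolding d_def using reach[OF q(1)] by (rule LeastI_ex)
    have "d q \<noteq> 0" using dq q(2) by (cases "d q") auto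
    then obtain m where m: "d q = Suc m" by (cases "d q") auto
    from dq m obtain y where y: "(q, y) \<in> ?R" "(y, src t) \<in> ?R ^^ m"
      using relpow_Suc_D2 by metis
    from y(1) obtain t' where t': "t' \<in> chain_trans A \<sigma>" "src t' = q" "tgt t' = y"
      by (auto simp: edges_def)
    have "d y \<le> m" unfolding d_def using y(2) by (rule Least_le)
    then show ?thesis using t' m by (intro exI[of _ t']) auto
  qed
  define r where "r q = (if q = src t then t else SOME t'. t' \<in> chain_trans A \<sigma> \<and> src t' = q \<and> d (tgt t') < d q)" for q
  have "\<forall>q\<in>B. r q \<in> chain_trans A \<sigma> \<and> src (r q) = q"
  proof
    fix q assume q: "q \<in> B"
    show "r q \<in> chain_trans A \<sigma> \<and> src (r q) = q"
    proof (cases "q = src t")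
      case True then show ?thesis using tc by (simp add: r_def)
    next
      case False then show ?thesis using someI_ex[OF step[OF q False]] by (simp add: r_def)
    qed
  qed
  moreover have "\<forall>q\<in>B. q \<noteq> src t \<longrightarrow> d (tgt (r q)) < d q"
    using someI_ex[OF step] by (simp add: r_def)
  ultimately show ?thesis by (intro exI[of _ r] exI[of _ d]) (simp add: r_def)
qed

lemma run_hits_transition:
  assumes r: "\<forall>q\<in>B. r q \<in> chain_trans A \<sigma> \<and> src (r q) = q" "r (src t) = t"
    and d: "\<forall>q\<in>B. q \<noteq> src t \<longrightarrow> d (tgt (r q)) < (d q :: nat)"
  shows "run_state A pB \<omega> s \<in> B \<Longrightarrow> (\<forall>i\<le>d (run_state A pB \<omega> s). \<omega> !! (s + i) \<in> {g. \<forall>q\<in>B. g q = r q}) \<Longrightarrow>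
    \<exists>i\<le>d (run_state A pB \<omega> s). run A pB \<omega> !! (s + i) = t"
proof (induction "d (run_state A pB \<omega> s)" arbitrary: s rule: less_induct)
  case less
  let ?q = "run_state A pB \<omega> s"
  have P: "\<And>i. i \<le> d ?q \<Longrightarrow> \<forall>q\<in>B. (\<omega> !! (s + i)) q = r q"
    using less.prems(2) by simp
  have E0: "(\<omega> !! s) ?q = r ?q" using P[of 0] less.prems(1) by simp
  show ?case
  proof (cases "?q = src t")
    case True
    then show ?thesis using E0 r(2) by (intro exI[of _ 0]) simp
  next
    case False
    have rq: "r ?q \<in> chain_trans A \<sigma>" "src (r ?q) = ?q" using r(1) less.prems(1) by auto
    then have tB: "tgt (r ?q) \<in> B" using chain_closed less.prems(1) by simp
    have st1: "run_state A pB \<omega> (Suc s) = tgt (r ?q)" using E0 tB B_states by (auto simp: into_states_def)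
    have lt: "d (run_state A pB \<omega> (Suc s)) < d ?q" using d less.prems(1) False st1 by auto
    have "\<forall>i\<le>d (run_state A pB \<omega> (Suc s)). \<omega> !! (Suc s + i) \<in> {g. \<forall>q\<in>B. g q = r q}"
    proof (intro allI impI)
      fix i assume "i \<le> d (run_state A pB \<omega> (Suc s))"
      then have "Suc i \<le> d ?q" using lt by simp
      then have "\<forall>q\<in>B. (\<omega> !! (s + Suc i)) q = r q" by (rule P)
      then show "\<omega> !! (Suc s + i) \<in> {g. \<forall>q\<in>B. g q = r q}" by simp
    qed
    from less.hyps[OF lt _ this] st1 tB
    obtain i where i: "i \<le> d (run_state A pB \<omega> (Suc s))" "run A pB \<omega> !! (Suc s + i) = t"
      by auto
    have "Suc i \<le> d ?q" using i(1) lt by simp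
    moreover have "run A pB \<omega> !! (s + Suc i) = t" using i(2) by simp
    ultimately show ?thesis by blast
  qed
qed

lemma AE_has_mecs: "AE \<omega> in chain_measure pB. has_mecs A pB \<omega> [M]"
proof (rule AE_chain_measure[OF pB_states pred_has_mecs])
  show "AE \<omega> in choice_streams. has_mecs A pB (run A pB \<omega>) [M]"
    using AE_choices_in_support by eventually_elim (simp add: has_mecs_if_chain_path run_chain_path)
qed

lemma prob_routing_choices_pos:
  assumes r: "\<forall>q\<in>B. r q \<in> chain_trans A \<sigma> \<and> src (r q) = q"
  shows "measure_pmf.prob (choice_fun_pmf A \<sigma>) {g. \<forall>q\<in>B. g q = r q} > 0"
proof -
  define R where "R q = (if q \<in> B then {r q} else UNIV)" for q
  have "{g. \<forall>q\<in>B. g q = r q} = Pi (states A) R"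
    using B_states by (auto simp: Pi_def R_def)
  then have "measure_pmf.prob (choice_fun_pmf A \<sigma>) {g. \<forall>q\<in>B. g q = r q} =
      (\<Prod>q\<in>states A. measure_pmf.prob (choice_pmf A \<sigma> q) (R q))"
    unfolding choice_fun_pmf_def by (simp add: measure_Pi_pmf_Pi[OF finite_states])
  also have "\<dots> > 0"
  proof (rule prod_pos)
    fix q assume q: "q \<in> states A"
    show "measure_pmf.prob (choice_pmf A \<sigma> q) (R q) > 0"
    proof (cases "q \<in> B")
      case True
      then have "measure_pmf.prob (choice_pmf A \<sigma> q) (R q) = chain_prob A \<sigma> q (r q)"
        using q by (simp add: R_def measure_pmf_single pmf_choice_pmf)
      also have "\<dots> > 0" using chain_prob_pos[of "r q"] r True by simp
      finally show ?thesis .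
    qed (simp add: R_def)
  qed
  finally show ?thesis .
qed

lemma run_takes_transition_in_block:
  assumes r: "\<forall>q\<in>B. r q \<in> chain_trans A \<sigma> \<and> src (r q) = q" "r (src t) = t"
    and d: "\<forall>q\<in>B. q \<noteq> src t \<longrightarrow> d (tgt (r q)) < (d q :: nat)" and L: "\<forall>q\<in>B. d q < L"
    and support: "\<forall>i. \<omega> !! i \<in> set_pmf (choice_fun_pmf A \<sigma>)"
    and block: "block_in L {g. \<forall>q\<in>B. g q = r q} j \<omega>"
  shows "\<exists>i. run A pB \<omega> !! (j * L + i) = t"
proof -
  have B: "run_state A pB \<omega> (j * L) \<in> B"
    using run_chain_path[OF support] by blast
  then have "\<forall>i\<le>d (run_state A pB \<omega> (j * L)). \<omega> !! (j * L + i) \<in> {g. \<forall>q\<in>B. g q = r q}"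
    using block L by (auto simp: block_in_def intro: le_less_trans)
  from run_hits_transition[OF r d B this] show ?thesis by blast
qed

lemma AE_run_takes_transition_infinitely_often:
  assumes t: "t \<in> bscc_trans A \<sigma> B"
  shows "AE \<omega> in choice_streams. infinite {k. run A pB \<omega> !! k = t}"
proof -
  obtain r d where r: "\<forall>q\<in>B. r q \<in> chain_trans A \<sigma> \<and> src (r q) = q" "r (src t) = t"
    and d: "\<forall>q\<in>B. q \<noteq> src t \<longrightarrow> d (tgt (r q)) < (d q :: nat)"
    using routing_to_transition[OF t] by blast
  define L where "L = Suc (Max (d ` B))"
  have L: "\<forall>q\<in>B. d q < L"
    using finite_B by (auto simp: L_def le_imp_less_Suc)
  have "AE \<omega> in choice_streams. \<forall>a. \<exists>j\<ge>a. block_in L {g. \<forall>q\<in>B. g q = r q} j \<omega>"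
    by (intro AE_stream_pmf_block_in_infinitely_often prob_routing_choices_pos r)
  with AE_choices_in_support show ?thesis
  proof eventually_elim
    case (elim \<omega>)
    show ?case
      unfolding infinite_nat_iff_unbounded_le
    proof
      fix m
      obtain j where j: "m \<le> j" "block_in L {g. \<forall>q\<in>B. g q = r q} j \<omega>"
        using elim(2) by blast
      then obtain i where "run A pB \<omega> !! (j * L + i) = t"
        using run_takes_transition_in_block[OF r d L elim(1)] by blast
      moreover have "m \<le> j * L + i"
        using j(1) by (simp add: L_def)
      ultimately show "\<exists>n\<ge>m. n \<in> {k. run A pB \<omega> !! k = t}" by blast
    qed
  qed
qed

lemma eventually_AE_Term_run_infinite:
  "\<forall>\<^sub>F n in sequentially. AE \<omega> in choice_streams. Term (int n) (run A pB \<omega>) = \<infinity>"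
proof -
  obtain K where K: "\<forall>w. chain_path pB w \<longrightarrow> - int K \<le> sum_list (map upd w)"
    using chain_path_sum_lower_bound by blast
  have "AE \<omega> in choice_streams. Term (int n) (run A pB \<omega>) = \<infinity>" if "K \<le> n" for n
    using AE_choices_in_support
  proof eventually_elim
    case (elim \<omega>)
    then have "\<forall>j. - int K \<le> sum_list (map upd (stake j (run A pB \<omega>)))"
      using K run_chain_path by blast
    then show ?case using that by (rule Term_eq_infinity)
  qed
  then show ?thesis
    unfolding eventually_sequentially by blast
qed

lemma eventually_AE_trans_count_run_infinite:
  assumes t: "t \<in> bscc_trans A \<sigma> B"
  shows "\<forall>\<^sub>F n in sequentially. AE \<omega> in choice_streams. trans_count t (int n) (run A pB \<omega>) = \<infinity>"
  using eventually_AE_Term_run_infinite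
proof eventually_elim
  case (elim n)
  with AE_run_takes_transition_infinitely_often[OF t] show ?case
    by eventually_elim (simp add: trans_count_def)
qed

lemma unbounded_if_eventually_AE_infinite:
  assumes pred: "\<And>n r. Measurable.pred (stream_space (count_space UNIV)) (\<lambda>\<omega>. enat_ge_real (F (int n) \<omega>) r)"
    and ae: "\<forall>\<^sub>F n in sequentially. AE \<omega> in choice_streams. F (int n) (run A pB \<omega>) = \<infinity>"
  shows "unbounded A F [M]"
  unfolding unbounded_def
proof
  let ?\<mu> = "path_measure A (md_strategy \<sigma>) pB"
  have \<mu>: "?\<mu> = chain_measure pB"
    by (rule path_measure_md_strategy[OF pB_states])
  interpret prob_space "chain_measure pB"
    by (rule prob_space_chain_measure[OF pB_states])
  have mecs: "measure ?\<mu> {\<omega> \<in> space ?\<mu>. has_mecs A pB \<omega> [M]} = 1"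
    using AE_has_mecs pred_chain_measure[OF pB_states pred_has_mecs] by (simp add: \<mu> prob_Collect_eq_1)
  have "\<forall>\<^sub>F n in sequentially. \<forall>r. cond_prob ?\<mu> {\<omega> \<in> space ?\<mu>. enat_ge_real (F (int n) \<omega>) r}
      {\<omega> \<in> space ?\<mu>. has_mecs A pB \<omega> [M]} = 1"
    using ae
  proof eventually_elim
    case (elim n)
    show ?case
    proof
      fix r
      have "AE \<omega> in chain_measure pB. enat_ge_real (F (int n) \<omega>) r"
        using elim by (intro AE_chain_measure[OF pB_states pred]) (auto simp: enat_ge_real_def)
      then show "cond_prob ?\<mu> {\<omega> \<in> space ?\<mu>. enat_ge_real (F (int n) \<omega>) r}
          {\<omega> \<in> space ?\<mu>. has_mecs A pB \<omega> [M]} = 1"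
        unfolding \<mu> by (intro cond_prob_eq_1_if_AE prob_space_axioms pred_chain_measure pB_states pred
            pred_has_mecs AE_has_mecs)
    qed
  qed
  then have "\<not> upper_estimate A F f [M]" for f
    using mecs by (intro not_upper_estimate_if_cond_prob_eventually_1[OF pB_states is_strategy_md_strategy]) auto
  then show "\<exists>f. upper_estimate A F f [M] \<Longrightarrow> False" by blast
qed

lemma unbounded_Term: "unbounded A Term [M]"
  by (rule unbounded_if_eventually_AE_infinite[OF pred_Term_ge eventually_AE_Term_run_infinite])

lemma unbounded_trans_count: "t \<in> bscc_trans A \<sigma> B \<Longrightarrow> unbounded A (trans_count t) [M]"
  by (rule unbounded_if_eventually_AE_infinite[OF pred_trans_count_ge eventually_AE_trans_count_run_infinite])

end

theorem mainTheorem12: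
  fixes A :: "'q vass_mdp" and \<sigma> :: "'q \<Rightarrow> 'q vtrans" and B :: "'q set" and M :: "'q mec"
  assumes "vass_mdp A"
    and "is_MD A \<sigma>"
    and "is_BSCC A \<sigma> B"
    and "bounded_zero A \<sigma> B"
    and "is_MEC A M"
    and "bscc_in_mec A \<sigma> B M"
  shows "unbounded A Term [M] \<and> (\<forall>t \<in> bscc_trans A \<sigma> B. unbounded A (trans_count t) [M])"
proof -
  obtain pB where "pB \<in> B" and "measure (path_measure A (md_strategy \<sigma>) pB)
      {\<omega> \<in> space (path_measure A (md_strategy \<sigma>) pB). returns pB \<omega> \<and> U_ret pB \<omega> = 0} = 1"
    using assms(4) unfolding bounded_zero_def Let_def by blast
  then interpret zero_bscc A \<sigma> B M pB
    using assms by unfold_locales (auto simp: bscc_in_mec_def)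
  show ?thesis
    using unbounded_Term unbounded_trans_count by blast
qed

end
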